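(* Assume in addition that $f:C(\Omega)\to C(\Omega)$ is continuously (Fréchet) differentiable. Then $D(\widehat\tau)$ is an open subset of $BUC_\alpha\times C(\Omega)$ and the map $\widehat\tau:D(\widehat\tau)\to C(\Omega)$ is continuously differentiable.
   Context: $\Omega\subset\mathbb R^n$ compact, $C(\Omega)$ with sup norm, $\alpha\ge0$ fixed. $f:C(\Omega)\to C(\Omega)$ is Lipschitz, $0<f(\phi)(x)\le M_f$ for a constant $M_f$, and non-increasing for the pointwise order. $BUC_\alpha$ is the Banach space of $\phi\in C((-\infty,0],C(\Omega))$ with $t\mapsto e^{-\alpha|t|}\phi(t,\cdot)$ bounded and uniformly continuous, norm $\sup_{t\le0}e^{-\alpha|t|}\|\phi(t,\cdot)\|_\infty$. For $\phi\in BUC_\alpha$, $\overline\phi(s)=\phi(s)$ for $s\le0$, $\overline\phi(s)=\phi(0)$ for $s\ge0$. $D(\widehat\tau)=\{(\phi,\delta)\in BUC_\alpha\times C(\Omega):\delta(x)<\int_{-\infty}^0f(\phi(s,\cdot))(x)ds$ whenever $\delta(x)>0\}$, and for $(\phi,\delta)\in D(\widehat\tau)$, $\widehat\tau(\phi,\delta)\in C(\Omega)$ is the unique function with $\int_{-\widehat\tau(\phi,\delta)(x)}^0f(\overline\phi(s,\cdot))(x)ds=\delta(x)$ for all $x\in\Omega$. *)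

theory Defs
  imports "HOL-Analysis.Analysis"
begin

text \<open>C(Omega) is modelled as the Banach space of (bounded) continuous real functions
on a compact space 'a, with the sup norm. A history phi in BUC_alpha is modelled
as a function real => C(Omega) whose values for t > 0 are fixed to 0.\<close>

type_synonym 'a hist = "real \<Rightarrow> ('a, real) bcontfun"

definition BUC :: "real \<Rightarrow> ('a::metric_space) hist set" where
  "BUC \<alpha> = {\<phi>. (\<forall>t>0. \<phi> t = 0) \<and> continuous_on {..0} \<phi> \<and>
     bounded ((\<lambda>t. exp (- \<alpha> * \<bar>t\<bar>) *\<^sub>R \<phi> t) ` {..0}) \<and>
     uniformly_continuous_on {..0} (\<lambda>t. exp (- \<alpha> * \<bar>t\<bar>) *\<^sub>R \<phi> t)}"

definition buc_norm :: "real \<Rightarrow> ('a::metric_space) hist \<Rightarrow> real" where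
  "buc_norm \<alpha> \<phi> = (SUP t\<in>{..0}. exp (- \<alpha> * \<bar>t\<bar>) * norm (\<phi> t))"

definition Xsp :: "real \<Rightarrow> (('a::metric_space) hist \<times> ('a, real) bcontfun) set" where
  "Xsp \<alpha> = BUC \<alpha> \<times> UNIV"

definition pnorm :: "real \<Rightarrow> ('a::metric_space) hist \<times> ('a, real) bcontfun \<Rightarrow> real" where
  "pnorm \<alpha> p = buc_norm \<alpha> (fst p) + norm (snd p)"

definition padd :: "('a::metric_space) hist \<times> ('a, real) bcontfun \<Rightarrow> 'a hist \<times> ('a, real) bcontfun
    \<Rightarrow> 'a hist \<times> ('a, real) bcontfun" where
  "padd p q = ((\<lambda>t. fst p t + fst q t), snd p + snd q)"

definition pminus :: "('a::metric_space) hist \<times> ('a, real) bcontfun \<Rightarrow> 'a hist \<times> ('a, real) bcontfun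
    \<Rightarrow> 'a hist \<times> ('a, real) bcontfun" where
  "pminus p q = ((\<lambda>t. fst p t - fst q t), snd p - snd q)"

definition pscale :: "real \<Rightarrow> ('a::metric_space) hist \<times> ('a, real) bcontfun \<Rightarrow> 'a hist \<times> ('a, real) bcontfun" where
  "pscale c p = ((\<lambda>t. c *\<^sub>R fst p t), c *\<^sub>R snd p)"

definition open_X :: "real \<Rightarrow> (('a::metric_space) hist \<times> ('a, real) bcontfun) set \<Rightarrow> bool" where
  "open_X \<alpha> U \<longleftrightarrow> U \<subseteq> Xsp \<alpha> \<and>
     (\<forall>p\<in>U. \<exists>e>0. \<forall>q\<in>Xsp \<alpha>. pnorm \<alpha> (pminus q p) < e \<longrightarrow> q \<in> U)"

definition bounded_linear_X :: "real \<Rightarrow> (('a::metric_space) hist \<times> ('a, real) bcontfun \<Rightarrow> ('a, real) bcontfun) \<Rightarrow> bool" where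
  "bounded_linear_X \<alpha> L \<longleftrightarrow>
     (\<forall>p\<in>Xsp \<alpha>. \<forall>q\<in>Xsp \<alpha>. L (padd p q) = L p + L q) \<and>
     (\<forall>c. \<forall>p\<in>Xsp \<alpha>. L (pscale c p) = c *\<^sub>R L p) \<and>
     (\<exists>K. \<forall>p\<in>Xsp \<alpha>. norm (L p) \<le> K * pnorm \<alpha> p)"

definition opnorm_X :: "real \<Rightarrow> (('a::metric_space) hist \<times> ('a, real) bcontfun \<Rightarrow> ('a, real) bcontfun) \<Rightarrow> real" where
  "opnorm_X \<alpha> L = (SUP p\<in>{p\<in>Xsp \<alpha>. pnorm \<alpha> p \<le> 1}. norm (L p))"

definition frechet_X :: "real \<Rightarrow> (('a::metric_space) hist \<times> ('a, real) bcontfun \<Rightarrow> ('a, real) bcontfun)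
   \<Rightarrow> ('a hist \<times> ('a, real) bcontfun) set \<Rightarrow> 'a hist \<times> ('a, real) bcontfun
   \<Rightarrow> ('a hist \<times> ('a, real) bcontfun \<Rightarrow> ('a, real) bcontfun) \<Rightarrow> bool" where
  "frechet_X \<alpha> F U p L \<longleftrightarrow> bounded_linear_X \<alpha> L \<and>
     (\<forall>\<epsilon>>0. \<exists>\<delta>>0. \<forall>q\<in>U. pnorm \<alpha> (pminus q p) < \<delta> \<longrightarrow>
        norm (F q - F p - L (pminus q p)) \<le> \<epsilon> * pnorm \<alpha> (pminus q p))"

definition C1_on_X :: "real \<Rightarrow> (('a::metric_space) hist \<times> ('a, real) bcontfun \<Rightarrow> ('a, real) bcontfun)
   \<Rightarrow> ('a hist \<times> ('a, real) bcontfun) set \<Rightarrow> bool" where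
  "C1_on_X \<alpha> F U \<longleftrightarrow> (\<exists>L. (\<forall>p\<in>U. frechet_X \<alpha> F U p (L p)) \<and>
     (\<forall>p\<in>U. \<forall>\<epsilon>>0. \<exists>\<delta>>0. \<forall>q\<in>U. pnorm \<alpha> (pminus q p) < \<delta> \<longrightarrow>
        opnorm_X \<alpha> (\<lambda>h. L q h - L p h) \<le> \<epsilon>))"

definition phibar :: "('a::metric_space) hist \<Rightarrow> 'a hist" where
  "phibar \<phi> s = (if s \<le> 0 then \<phi> s else \<phi> 0)"

text \<open>The domain D(tau-hat).  The integral over (-infinity,0] of the positive integrand is
  taken as an extended nonnegative Lebesgue integral (it may be infinite).\<close>
definition Dtau :: "(('a::metric_space, real) bcontfun \<Rightarrow> ('a, real) bcontfun) \<Rightarrow> real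
    \<Rightarrow> ('a hist \<times> ('a, real) bcontfun) set" where
  "Dtau f \<alpha> = {(\<phi>, \<delta>). \<phi> \<in> BUC \<alpha> \<and>
     (\<forall>x. 0 < apply_bcontfun \<delta> x \<longrightarrow>
        ennreal (apply_bcontfun \<delta> x) <
          set_nn_integral lborel {..0} (\<lambda>s. ennreal (apply_bcontfun (f (\<phi> s)) x)))}"

definition tauhat :: "(('a::metric_space, real) bcontfun \<Rightarrow> ('a, real) bcontfun)
    \<Rightarrow> 'a hist \<Rightarrow> ('a, real) bcontfun \<Rightarrow> ('a, real) bcontfun" where
  "tauhat f \<phi> \<delta> = (THE \<tau>. \<forall>x.
     interval_lebesgue_integral lborel (ereal (- apply_bcontfun \<tau> x)) (ereal 0)
       (\<lambda>s. apply_bcontfun (f (phibar \<phi> s)) x) = apply_bcontfun \<delta> x)"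

end

theory Submission
  imports Defs
begin

text \<open>Write \<open>G x t\<close> for the integral of \<open>f (phibar \<phi> s) x\<close> over \<open>s \<in> [-t, 0]\<close>. It is strictly
  increasing in \<open>t\<close>, with derivative \<open>f (phibar \<phi> (-t)) x > 0\<close>, and \<open>\<tau> = tauhat f \<phi> \<delta>\<close> is the
  root of \<open>G x (\<tau> x) = \<delta> x\<close>. At a point of the domain, compactness of \<open>\<Omega>\<close> yields a horizon \<open>T\<close>
  with \<open>\<delta> x + \<eta> \<le> G x T\<close> and a lower bound \<open>m > 0\<close> of the integrand on \<open>[-T, \<infinity>)\<close>. Both survive
  small perturbations of \<open>(\<phi>, \<delta>)\<close> (with \<open>\<eta>\<close> and \<open>m / 2\<close>), which gives openness and a Lipschitz
  bound on the roots. Differentiating \<open>G x (\<tau> x) = \<delta> x\<close> implicitly gives the derivative at \<open>(h, \<epsilon>)\<close>,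
  \<open>(\<epsilon> x - \<integral>\<^sub>-\<^sub>\<tau>\<^sub>x\<^sup>0 f' (phibar \<phi> s) (phibar h s) x ds) / f (phibar \<phi> (- \<tau> x)) x\<close>.
  The remainder and continuity estimates are mean value bounds, using that \<open>f\<close> and \<open>f'\<close> are
  uniformly controlled near the compact set \<open>phibar \<phi> ` [-T, 0]\<close>.\<close>

lemma mvt_abs_diff_le:
  fixes g g' :: "real \<Rightarrow> real"
  assumes d: "\<And>u. min a b \<le> u \<Longrightarrow> u \<le> max a b \<Longrightarrow> (g has_real_derivative g' u) (at u)"
    and B: "\<And>u. min a b \<le> u \<Longrightarrow> u \<le> max a b \<Longrightarrow> \<bar>g' u\<bar> \<le> B"
  shows "\<bar>g b - g a\<bar> \<le> B * \<bar>b - a\<bar>"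
proof (cases a b rule: linorder_cases)
  case less
  then obtain z where z: "a < z" "z < b" "g b - g a = (b - a) * g' z"
    using MVT2[of a b g g'] d by (auto simp: min_def max_def)
  have "\<bar>g' z\<bar> \<le> B" using B z less by (auto simp: min_def max_def)
  then show ?thesis using z less by (simp add: abs_mult mult.commute mult_right_mono)
next
  case greater
  then obtain z where z: "b < z" "z < a" "g a - g b = (a - b) * g' z"
    using MVT2[of b a g g'] d by (auto simp: min_def max_def)
  have "\<bar>g' z\<bar> \<le> B" using B z greater by (auto simp: min_def max_def)
  then show ?thesis using z greater
    by (simp add: abs_mult mult.commute mult_right_mono abs_minus_commute)
qed simp

lemma mvt_diff_ge:
  fixes g g' :: "real \<Rightarrow> real"
  assumes ab: "a \<le> b"
    and d: "\<And>u. a \<le> u \<Longrightarrow> u \<le> b \<Longrightarrow> (g has_real_derivative g' u) (at u)"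
    and c: "\<And>u. a \<le> u \<Longrightarrow> u \<le> b \<Longrightarrow> c \<le> g' u"
  shows "c * (b - a) \<le> g b - g a"
proof (cases "a = b")
  case False
  then obtain z where z: "a < z" "z < b" "g b - g a = (b - a) * g' z"
    using MVT2[of a b g g'] d ab by auto
  have "c \<le> g' z" using c z by auto
  then show ?thesis using z by (simp add: mult.commute mult_right_mono)
qed simp

lemma mvt_abs_diff_ge:
  fixes g g' :: "real \<Rightarrow> real"
  assumes d: "\<And>u. min a b \<le> u \<Longrightarrow> u \<le> max a b \<Longrightarrow> (g has_real_derivative g' u) (at u)"
    and c: "\<And>u. min a b \<le> u \<Longrightarrow> u \<le> max a b \<Longrightarrow> c \<le> g' u"
  shows "c * \<bar>b - a\<bar> \<le> \<bar>g b - g a\<bar>"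
proof (cases "a \<le> b")
  case True
  have "c * (b - a) \<le> g b - g a" by (rule mvt_diff_ge[OF True]) (use d c True in auto)
  then show ?thesis using True by auto
next
  case False
  have "c * (a - b) \<le> g a - g b" by (rule mvt_diff_ge[of b a]) (use d c False in auto)
  then show ?thesis using False by auto
qed

lemma abs_divide_le_divide:
  fixes n N d c :: real
  assumes "\<bar>n\<bar> \<le> N" "c \<le> d" "0 < c"
  shows "\<bar>n / d\<bar> \<le> N / c"
proof -
  have "\<bar>n / d\<bar> = \<bar>n\<bar> / d" using assms by simp
  also have "\<dots> \<le> N / d" using assms by (intro divide_right_mono) auto
  also have "\<dots> \<le> N / c" using assms by (intro divide_left_mono) auto
  finally show ?thesis .
qed

lemma uniformly_continuous_near_compact:
  fixes g :: "'a::metric_space \<Rightarrow> 'b::metric_space"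
  assumes cont: "continuous_on UNIV g" and C: "compact C" and e: "e > 0"
  shows "\<exists>d>0. \<forall>z\<in>C. \<forall>y. dist y z < d \<longrightarrow> dist (g y) (g z) < e"
proof -
  define \<G> where "\<G> = (\<lambda>c. {w. dist (g w) (g c) < e/2}) ` C"
  have "open G" if "G \<in> \<G>" for G
    using that cont unfolding \<G>_def
    by (auto intro!: open_Collect_less continuous_intros simp: continuous_on_eq_continuous_at)
  moreover have "C \<subseteq> \<Union>\<G>" using e by (auto simp: \<G>_def)
  ultimately obtain d where d: "0 < d" "\<And>x. x \<in> C \<Longrightarrow> \<exists>G \<in> \<G>. ball x d \<subseteq> G"
    using Heine_Borel_lemma[OF C] by metis
  have "dist (g y) (g z) < e" if z: "z \<in> C" and y: "dist y z < d" for z y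
  proof -
    obtain c where "ball z d \<subseteq> {w. dist (g w) (g c) < e/2}" using d z unfolding \<G>_def by blast
    moreover have "z \<in> ball z d" "y \<in> ball z d" using d y by (auto simp: dist_commute)
    ultimately have "dist (g z) (g c) < e/2" "dist (g y) (g c) < e/2" by blast+
    then show ?thesis using dist_triangle_half_l by blast
  qed
  then show ?thesis using d by blast
qed

lemma abs_apply_bcontfun_le: "\<bar>apply_bcontfun (F::('a::topological_space, real) bcontfun) x\<bar> \<le> norm F"
  using norm_bounded[of F x] by simp

lemma bounded_linear_apply_bcontfun:
  "bounded_linear (\<lambda>F::('a::topological_space, real) bcontfun. apply_bcontfun F x)"
  by (rule bounded_linear_intro[where K=1]) (auto simp: norm_bounded[where 'b=real, simplified])

lemma continuous_on_apply_bcontfun_at: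
  "continuous_on S K \<Longrightarrow>
   continuous_on S (\<lambda>s. apply_bcontfun (K s :: ('a::topological_space, real) bcontfun) x)"
  by (rule continuous_on_compose2[OF bounded_linear.continuous_on[OF bounded_linear_apply_bcontfun
        continuous_on_id]]) auto

lemma continuous_on_apply_bcontfun_pair:
  "continuous_on UNIV (\<lambda>p::('a::metric_space, real) bcontfun \<times> 'a. apply_bcontfun (fst p) (snd p))"
  unfolding continuous_on_iff
proof (intro ballI allI impI)
  fix p :: "('a, real) bcontfun \<times> 'a" and e :: real assume e: "e > 0"
  obtain F0 x0 where p: "p = (F0, x0)" by (cases p)
  obtain d where d: "d > 0" "\<And>x. dist x x0 < d \<Longrightarrow> dist (F0 x) (F0 x0) < e/2"
    using e continuous_on_apply_bcontfun[of UNIV F0] unfolding continuous_on_iff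
    by (metis UNIV_I half_gt_zero)
  show "\<exists>d>0. \<forall>q\<in>UNIV. dist q p < d \<longrightarrow>
          dist (apply_bcontfun (fst q) (snd q)) (apply_bcontfun (fst p) (snd p)) < e"
  proof (intro exI[of _ "min d (e/2)"] conjI ballI impI)
    fix q :: "('a, real) bcontfun \<times> 'a" assume q: "dist q p < min d (e/2)"
    obtain F x where qq: "q = (F, x)" by (cases q)
    have "dist F F0 \<le> dist q p" "dist x x0 \<le> dist q p" using p qq
      by (auto simp: dist_Pair_Pair intro: real_sqrt_sum_squares_ge1 real_sqrt_sum_squares_ge2)
    then have "dist F F0 < e/2" "dist x x0 < d" using q by auto
    then have "dist (F x) (F0 x) < e/2" "dist (F0 x) (F0 x0) < e/2"
      using dist_bounded[of F x F0] d(2) by auto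
    then show "dist (apply_bcontfun (fst q) (snd q)) (apply_bcontfun (fst p) (snd p)) < e"
      using p qq dist_triangle_half_r[of "F0 x"] by (simp add: dist_commute)
  qed (use d e in auto)
qed

lemma continuous_on_kernel_pair:
  assumes "continuous_on UNIV (K :: real \<Rightarrow> ('a::metric_space, real) bcontfun)"
  shows "continuous_on UNIV (\<lambda>p::real \<times> 'a. apply_bcontfun (K (fst p)) (snd p))"
proof -
  have "continuous_on UNIV (\<lambda>p::real \<times> 'a. (K (fst p), snd p))"
    by (intro continuous_intros continuous_on_compose2[OF assms]) auto
  then show ?thesis
    using continuous_on_compose2[OF continuous_on_apply_bcontfun_pair] by fastforce
qed

lemma continuous_on_kernel_diagonal:
  assumes "continuous_on UNIV (K :: real \<Rightarrow> ('a::metric_space, real) bcontfun)"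
    and "continuous_on UNIV \<tau>"
  shows "continuous_on UNIV (\<lambda>x. apply_bcontfun (K (\<tau> x)) x)"
proof -
  have "continuous_on UNIV (\<lambda>x. (\<tau> x, x))" by (intro continuous_intros assms(2))
  then show ?thesis
    using continuous_on_compose2[OF continuous_on_kernel_pair[OF assms(1)]] by fastforce
qed

lemma continuous_on_bcontfun_compact:
  "compact (UNIV :: 'a::metric_space set) \<Longrightarrow> continuous_on UNIV g \<Longrightarrow> (g :: 'a \<Rightarrow> real) \<in> bcontfun"
  unfolding bcontfun_def using compact_imp_bounded[OF compact_continuous_image] by auto

definition kernel_integral :: "(real \<Rightarrow> ('a::metric_space, real) bcontfun) \<Rightarrow> 'a \<Rightarrow> real \<Rightarrow> real" where
  "kernel_integral K x t =
     interval_lebesgue_integral lborel (ereal (- t)) (ereal 0) (\<lambda>s. apply_bcontfun (K s) x)"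

lemma interval_integral_has_real_derivative:
  fixes g :: "real \<Rightarrow> real"
  assumes "continuous_on UNIV g"
  shows "((\<lambda>u. interval_lebesgue_integral lborel (ereal 0) (ereal u) g) has_real_derivative g v) (at v)"
proof -
  define a where "a = min 0 v - 1"
  define b where "b = max 0 v + 1"
  have "((\<lambda>u. interval_lebesgue_integral lborel (ereal 0) (ereal u) g) has_vector_derivative g v)
          (at v within {a..b})"
    by (rule interval_integral_FTC2[where c=0])
      (auto simp: a_def b_def intro: continuous_on_subset[OF assms])
  then have "((\<lambda>u. interval_lebesgue_integral lborel (ereal 0) (ereal u) g) has_vector_derivative g v)
          (at v within {a<..<b})"
    by (rule has_vector_derivative_within_subset) auto
  then show ?thesis
    by (subst (asm) has_vector_derivative_within_open)
      (auto simp: a_def b_def has_real_derivative_iff_has_vector_derivative)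
qed

lemma kernel_integral_has_real_derivative:
  assumes "continuous_on UNIV K"
  shows "(kernel_integral K x has_real_derivative apply_bcontfun (K (-t)) x) (at t)"
proof -
  let ?I = "\<lambda>u. interval_lebesgue_integral lborel (ereal 0) (ereal u) (\<lambda>s. apply_bcontfun (K s) x)"
  have "(?I has_real_derivative apply_bcontfun (K (-t)) x) (at (-t))"
    by (rule interval_integral_has_real_derivative[OF continuous_on_apply_bcontfun_at[OF assms]])
  then have "((\<lambda>t. - ?I (-t)) has_real_derivative apply_bcontfun (K (-t)) x) (at t)"
    using DERIV_mirror DERIV_minus by fastforce
  moreover have "kernel_integral K x = (\<lambda>t. - ?I (-t))"
    unfolding kernel_integral_def by (intro ext interval_integral_endpoints_reverse)
  ultimately show ?thesis by simp
qed

lemma kernel_integral_zero [simp]: "kernel_integral K x 0 = 0"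
  by (simp add: kernel_integral_def interval_lebesgue_integral_def einterval_same
      set_lebesgue_integral_def)

lemma abs_kernel_integral_diff_le:
  assumes "continuous_on UNIV K"
    and "\<And>u. min a b \<le> u \<Longrightarrow> u \<le> max a b \<Longrightarrow> \<bar>apply_bcontfun (K (-u)) x\<bar> \<le> B"
  shows "\<bar>kernel_integral K x b - kernel_integral K x a\<bar> \<le> B * \<bar>b - a\<bar>"
  by (rule mvt_abs_diff_le[OF kernel_integral_has_real_derivative[OF assms(1)] assms(2)])

lemma abs_kernel_integral_le:
  assumes "continuous_on UNIV K"
    and "\<And>u. min 0 t \<le> u \<Longrightarrow> u \<le> max 0 t \<Longrightarrow> \<bar>apply_bcontfun (K (-u)) x\<bar> \<le> B"
  shows "\<bar>kernel_integral K x t\<bar> \<le> B * \<bar>t\<bar>"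
  using abs_kernel_integral_diff_le[of K 0 t x B] assms by simp

text \<open>Linearity in the kernel is obtained from the derivative, which avoids integrability side
  conditions.\<close>
lemma kernel_integral_lincomb:
  assumes K1: "continuous_on UNIV K1" and K2: "continuous_on UNIV K2"
  shows "kernel_integral (\<lambda>s. a *\<^sub>R K1 s + b *\<^sub>R K2 s) x t
           = a * kernel_integral K1 x t + b * kernel_integral K2 x t"
proof -
  let ?K = "\<lambda>s. a *\<^sub>R K1 s + b *\<^sub>R K2 s"
  have K: "continuous_on UNIV ?K" by (intro continuous_intros K1 K2)
  have "\<bar>(kernel_integral ?K x t - (a * kernel_integral K1 x t + b * kernel_integral K2 x t))
      - (kernel_integral ?K x 0 - (a * kernel_integral K1 x 0 + b * kernel_integral K2 x 0))\<bar>
      \<le> 0 * \<bar>t - 0\<bar>"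
  proof (rule mvt_abs_diff_le)
    fix u
    show "((\<lambda>t. kernel_integral ?K x t - (a * kernel_integral K1 x t + b * kernel_integral K2 x t))
        has_real_derivative apply_bcontfun (?K (-u)) x
          - (a * apply_bcontfun (K1 (-u)) x + b * apply_bcontfun (K2 (-u)) x)) (at u)"
      by (intro DERIV_diff DERIV_add DERIV_cmult kernel_integral_has_real_derivative K1 K2 K)
  qed simp
  then show ?thesis by simp
qed

lemma kernel_integral_diff:
  assumes "continuous_on UNIV K1" "continuous_on UNIV K2"
  shows "kernel_integral (\<lambda>s. K1 s - K2 s) x t = kernel_integral K1 x t - kernel_integral K2 x t"
  using kernel_integral_lincomb[OF assms, of 1 "-1"] by simp

lemma kernel_integral_equicontinuous:
  assumes K: "continuous_on UNIV (K :: real \<Rightarrow> ('a::metric_space, real) bcontfun)" and e: "e > 0"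
  shows "\<exists>d>0. \<forall>x. dist x x0 < d \<longrightarrow> (\<forall>t. \<bar>t\<bar> \<le> R \<longrightarrow>
           \<bar>kernel_integral K x t - kernel_integral K x0 t\<bar> \<le> e * \<bar>t\<bar>)"
proof -
  let ?\<Phi> = "\<lambda>p::real \<times> 'a. apply_bcontfun (K (fst p)) (snd p)"
  obtain d where d: "d > 0"
    "\<And>z y. z \<in> {-R..R} \<times> {x0} \<Longrightarrow> dist y z < d \<Longrightarrow> dist (?\<Phi> y) (?\<Phi> z) < e"
    using uniformly_continuous_near_compact[OF continuous_on_kernel_pair[OF K] _ e,
        of "{-R..R} \<times> {x0}"] compact_Times[OF compact_Icc compact_sing] by metis
  have "\<bar>kernel_integral K x t - kernel_integral K x0 t\<bar> \<le> e * \<bar>t\<bar>"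
    if x: "dist x x0 < d" and t: "\<bar>t\<bar> \<le> R" for x t
  proof -
    have "\<bar>(kernel_integral K x t - kernel_integral K x0 t)
        - (kernel_integral K x 0 - kernel_integral K x0 0)\<bar> \<le> e * \<bar>t - 0\<bar>"
    proof (rule mvt_abs_diff_le)
      fix u
      show "((\<lambda>t. kernel_integral K x t - kernel_integral K x0 t) has_real_derivative
              apply_bcontfun (K (-u)) x - apply_bcontfun (K (-u)) x0) (at u)"
        by (intro DERIV_diff kernel_integral_has_real_derivative K)
    next
      fix u assume "min 0 t \<le> u" "u \<le> max 0 t"
      then have "(-u, x0) \<in> {-R..R} \<times> {x0}" using t by auto
      moreover have "dist (-u, x) (-u, x0) < d" using x by (simp add: dist_Pair_Pair)
      ultimately show "\<bar>apply_bcontfun (K (-u)) x - apply_bcontfun (K (-u)) x0\<bar> \<le> e"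
        using d(2) by (fastforce simp: dist_real_def)
    qed
    then show ?thesis by simp
  qed
  then show ?thesis using d(1) by blast
qed

lemma continuous_on_kernel_integral:
  assumes K: "continuous_on UNIV (K :: real \<Rightarrow> ('a::metric_space, real) bcontfun)"
    and \<tau>: "continuous_on UNIV \<tau>"
  shows "continuous_on UNIV (\<lambda>x. kernel_integral K x (\<tau> x))"
  unfolding continuous_on_iff
proof (intro ballI allI impI)
  fix x0 :: 'a and e :: real assume e: "e > 0"
  define R where "R = \<bar>\<tau> x0\<bar> + 1"
  have R: "R > 0" by (simp add: R_def add_nonneg_pos)
  have "compact (K ` {-R..R})" by (intro compact_continuous_image continuous_on_subset[OF K]) auto
  then obtain B where B: "B > 0" "\<And>s. s \<in> {-R..R} \<Longrightarrow> norm (K s) \<le> B"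
    by (auto dest!: compact_imp_bounded simp: bounded_pos)
  obtain d1 where d1: "d1 > 0" "\<And>x. dist x x0 < d1 \<Longrightarrow> dist (\<tau> x) (\<tau> x0) < min 1 (e / (2 * B))"
    using \<tau> e B unfolding continuous_on_iff by (metis UNIV_I divide_pos_pos min_less_iff_conj
        zero_less_mult_iff zero_less_numeral zero_less_one)
  obtain d2 where d2: "d2 > 0" "\<And>x. dist x x0 < d2 \<Longrightarrow> \<bar>kernel_integral K x (\<tau> x0)
      - kernel_integral K x0 (\<tau> x0)\<bar> \<le> e / (2 * R) * \<bar>\<tau> x0\<bar>"
    using kernel_integral_equicontinuous[OF K, of "e / (2 * R)" x0 R] e R by (auto simp: R_def)
  have "dist (kernel_integral K x (\<tau> x)) (kernel_integral K x0 (\<tau> x0)) < e"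
    if x: "dist x x0 < min d1 d2" for x
  proof -
    have tx: "\<bar>\<tau> x - \<tau> x0\<bar> < 1" "\<bar>\<tau> x - \<tau> x0\<bar> < e / (2 * B)"
      using d1(2)[of x] x by (auto simp: dist_real_def)
    have "\<bar>kernel_integral K x (\<tau> x) - kernel_integral K x (\<tau> x0)\<bar> \<le> B * \<bar>\<tau> x - \<tau> x0\<bar>"
    proof (rule abs_kernel_integral_diff_le[OF K])
      fix u assume "min (\<tau> x0) (\<tau> x) \<le> u" "u \<le> max (\<tau> x0) (\<tau> x)"
      then have "-u \<in> {-R..R}" using tx by (auto simp: R_def)
      then show "\<bar>apply_bcontfun (K (- u)) x\<bar> \<le> B"
        using B(2) abs_apply_bcontfun_le[of "K (-u)" x] by fastforce
    qed
    also have "\<dots> < e / 2" using tx B by (simp add: field_simps)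
    finally have 1: "\<bar>kernel_integral K x (\<tau> x) - kernel_integral K x (\<tau> x0)\<bar> < e / 2" .
    have "e / (2 * R) * \<bar>\<tau> x0\<bar> \<le> e / (2 * R) * R" using R e by (intro mult_left_mono) (auto simp: R_def)
    also have "\<dots> = e / 2" using R by simp
    finally have 2: "\<bar>kernel_integral K x (\<tau> x0) - kernel_integral K x0 (\<tau> x0)\<bar> \<le> e / 2"
      using d2(2)[of x] x by linarith
    show ?thesis using 1 2 unfolding dist_real_def by linarith
  qed
  then show "\<exists>d>0. \<forall>x\<in>UNIV. dist x x0 < d \<longrightarrow>
               dist (kernel_integral K x (\<tau> x)) (kernel_integral K x0 (\<tau> x0)) < e"
    using d1(1) d2(1) by (intro exI[of _ "min d1 d2"]) auto
qed

definition weighted_bounded :: "real \<Rightarrow> ('a::metric_space) hist \<Rightarrow> bool" where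
  "weighted_bounded \<alpha> h \<longleftrightarrow> bounded ((\<lambda>t. exp (- \<alpha> * \<bar>t\<bar>) *\<^sub>R h t) ` {..0})"

lemma weighted_bounded_BUC: "\<phi> \<in> BUC \<alpha> \<Longrightarrow> weighted_bounded \<alpha> \<phi>"
  by (simp add: BUC_def weighted_bounded_def)

lemma weighted_bounded_diff:
  assumes "weighted_bounded \<alpha> \<psi>" "weighted_bounded \<alpha> \<phi>"
  shows "weighted_bounded \<alpha> (\<lambda>t. \<psi> t - \<phi> t)"
  using bounded_minus_comp[OF assms[unfolded weighted_bounded_def]]
  by (simp add: weighted_bounded_def scaleR_diff_right)

lemma norm_le_buc_norm:
  assumes b: "weighted_bounded \<alpha> h" and s: "s \<le> 0"
  shows "norm (h s) \<le> exp (\<alpha> * \<bar>s\<bar>) * buc_norm \<alpha> h"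
proof -
  obtain B where B: "\<And>t. t \<le> 0 \<Longrightarrow> norm (exp (- \<alpha> * \<bar>t\<bar>) *\<^sub>R h t) \<le> B"
    using b by (auto simp: bounded_iff weighted_bounded_def)
  have "bdd_above ((\<lambda>t. exp (- \<alpha> * \<bar>t\<bar>) * norm (h t)) ` {..0})"
    using B by (intro bdd_aboveI2[where M=B]) auto
  then have "exp (- \<alpha> * \<bar>s\<bar>) * norm (h s) \<le> buc_norm \<alpha> h"
    unfolding buc_norm_def using s by (intro cSUP_upper) auto
  then have "exp (\<alpha> * \<bar>s\<bar>) * (exp (- \<alpha> * \<bar>s\<bar>) * norm (h s)) \<le> exp (\<alpha> * \<bar>s\<bar>) * buc_norm \<alpha> h"
    by (intro mult_left_mono) auto
  then show ?thesis by (simp add: mult.assoc[symmetric] exp_add[symmetric])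
qed

lemma buc_norm_nonneg: "weighted_bounded \<alpha> h \<Longrightarrow> buc_norm \<alpha> h \<ge> 0"
  using norm_le_buc_norm[of \<alpha> h 0] norm_ge_zero[of "h 0"] by (simp del: norm_ge_zero)

lemma phibar_min: "phibar \<phi> s = \<phi> (min s 0)"
  by (simp add: phibar_def min_def)

lemma phibar_diff: "phibar (\<lambda>t. \<psi> t - \<phi> t) s = phibar \<psi> s - phibar \<phi> s"
  and phibar_add: "phibar (\<lambda>t. \<psi> t + \<phi> t) s = phibar \<psi> s + phibar \<phi> s"
  and phibar_scaleR: "phibar (\<lambda>t. c *\<^sub>R \<phi> t) s = c *\<^sub>R phibar \<phi> s"
  by (simp_all add: phibar_def)

lemma continuous_on_phibar: "\<phi> \<in> BUC \<alpha> \<Longrightarrow> continuous_on UNIV (phibar \<phi>)"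
  unfolding phibar_min[abs_def] BUC_def
  by (auto intro!: continuous_on_compose2[of "{..0}" \<phi>] continuous_intros)

lemma compact_phibar_image: "\<phi> \<in> BUC \<alpha> \<Longrightarrow> compact (phibar \<phi> ` {-T..0})"
  by (intro compact_continuous_image continuous_on_subset[OF continuous_on_phibar]) auto

lemma phibar_in_image: "0 \<le> T \<Longrightarrow> -T \<le> s \<Longrightarrow> phibar \<phi> s \<in> phibar \<phi> ` {-T..0}"
  by (rule image_eqI[of _ _ "min s 0"]) (auto simp: phibar_def min_def)

lemma norm_phibar_le:
  assumes \<alpha>: "\<alpha> \<ge> 0" and b: "weighted_bounded \<alpha> h" and T: "0 \<le> T" and s: "-T \<le> s"
  shows "norm (phibar h s) \<le> exp (\<alpha> * T) * buc_norm \<alpha> h"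
proof -
  have "norm (phibar h s) \<le> exp (\<alpha> * \<bar>min s 0\<bar>) * buc_norm \<alpha> h"
    unfolding phibar_min by (rule norm_le_buc_norm[OF b]) auto
  also have "\<dots> \<le> exp (\<alpha> * T) * buc_norm \<alpha> h"
    using \<alpha> T s buc_norm_nonneg[OF b] mult_left_mono[of "- min s 0" T \<alpha>]
    by (intro mult_right_mono) auto
  finally show ?thesis .
qed

lemma Xsp_weighted_bounded: "p \<in> Xsp \<alpha> \<Longrightarrow> weighted_bounded \<alpha> (fst p)"
  by (auto simp: Xsp_def weighted_bounded_BUC)

lemma Xsp_continuous_on_phibar: "p \<in> Xsp \<alpha> \<Longrightarrow> continuous_on UNIV (phibar (fst p))"
  by (rule continuous_on_phibar) (auto simp: Xsp_def)

lemma fst_pminus: "fst (pminus q p) = (\<lambda>t. fst q t - fst p t)"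
  and snd_pminus: "snd (pminus q p) = snd q - snd p"
  by (simp_all add: pminus_def)

lemma Xsp_weighted_bounded_pminus:
  "q \<in> Xsp \<alpha> \<Longrightarrow> p \<in> Xsp \<alpha> \<Longrightarrow> weighted_bounded \<alpha> (fst (pminus q p))"
  unfolding fst_pminus by (intro weighted_bounded_diff Xsp_weighted_bounded) assumption+

lemma Xsp_continuous_on_phibar_pminus:
  "q \<in> Xsp \<alpha> \<Longrightarrow> p \<in> Xsp \<alpha> \<Longrightarrow> continuous_on UNIV (phibar (fst (pminus q p)))"
  using continuous_on_diff[OF Xsp_continuous_on_phibar Xsp_continuous_on_phibar]
  by (simp add: fst_pminus phibar_diff[abs_def])

lemma pnorm_nonneg: "weighted_bounded \<alpha> (fst p) \<Longrightarrow> pnorm \<alpha> p \<ge> 0"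
  using buc_norm_nonneg by (fastforce simp: pnorm_def)

lemma norm_phibar_le_pnorm:
  assumes "\<alpha> \<ge> 0" "weighted_bounded \<alpha> (fst p)" "0 \<le> T" "-T \<le> s"
  shows "norm (phibar (fst p) s) \<le> exp (\<alpha> * T) * pnorm \<alpha> p"
proof -
  have "norm (phibar (fst p) s) \<le> exp (\<alpha> * T) * buc_norm \<alpha> (fst p)"
    by (rule norm_phibar_le[OF assms])
  also have "\<dots> \<le> exp (\<alpha> * T) * pnorm \<alpha> p" by (intro mult_left_mono) (auto simp: pnorm_def)
  finally show ?thesis .
qed

lemma abs_snd_le_pnorm:
  "weighted_bounded \<alpha> (fst p) \<Longrightarrow> \<bar>apply_bcontfun (snd p) x\<bar> \<le> pnorm \<alpha> p"
  using abs_apply_bcontfun_le[of "snd p" x] buc_norm_nonneg[of \<alpha> "fst p"] unfolding pnorm_def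
  by linarith

lemma opnorm_X_le:
  fixes L :: "('a::metric_space) hist \<times> ('a, real) bcontfun \<Rightarrow> ('a, real) bcontfun"
  assumes "\<And>h. h \<in> Xsp \<alpha> \<Longrightarrow> pnorm \<alpha> h \<le> 1 \<Longrightarrow> norm (L h) \<le> e"
  shows "opnorm_X \<alpha> L \<le> e"
  unfolding opnorm_X_def
proof (rule cSUP_least)
  let ?z = "((\<lambda>_. 0) :: 'a hist, 0 :: ('a, real) bcontfun)"
  have "(\<lambda>_. 0) \<in> (BUC \<alpha> :: 'a hist set)"
    by (simp add: BUC_def uniformly_continuous_on_const image_constant_conv)
  moreover have "(SUP t\<in>{..(0::real)}. (0::real)) = 0" by (rule cSUP_const) auto
  ultimately have "?z \<in> {p \<in> Xsp \<alpha>. pnorm \<alpha> p \<le> 1}"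
    by (simp add: Xsp_def pnorm_def buc_norm_def)
  then show "{p \<in> Xsp \<alpha>. pnorm \<alpha> p \<le> 1} \<noteq> ({} :: ('a hist \<times> ('a, real) bcontfun) set)"
    by blast
next
  fix h :: "'a hist \<times> ('a, real) bcontfun" assume "h \<in> {p \<in> Xsp \<alpha>. pnorm \<alpha> p \<le> 1}"
  then show "norm (L h) \<le> e" by (intro assms) simp_all
qed

lemma Dtau_subset_Xsp: "Dtau f \<alpha> \<subseteq> Xsp \<alpha>"
  by (auto simp: Dtau_def Xsp_def)

locale delay_setting =
  fixes f :: "('a::metric_space, real) bcontfun \<Rightarrow> ('a, real) bcontfun"
    and f' :: "('a, real) bcontfun \<Rightarrow> ('a, real) bcontfun \<Rightarrow>\<^sub>L ('a, real) bcontfun"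
    and \<alpha> Lf :: real
  assumes compact_space: "compact (UNIV :: 'a set)"
    and alpha_nonneg: "\<alpha> \<ge> 0"
    and lipschitz: "Lf-lipschitz_on UNIV f"
    and f_pos: "\<And>\<phi> x. 0 < apply_bcontfun (f \<phi>) x"
    and f_has_derivative: "\<And>\<phi>. (f has_derivative blinfun_apply (f' \<phi>)) (at \<phi>)"
    and continuous_f': "continuous_on UNIV f'"
begin

lemma Lf_nonneg: "Lf \<ge> 0"
  by (rule lipschitz_on_nonneg[OF lipschitz])

lemma abs_f_apply_diff_le: "\<bar>apply_bcontfun (f a) x - apply_bcontfun (f b) x\<bar> \<le> Lf * norm (a - b)"
  using order_trans[OF abs_apply_bcontfun_le lipschitz_on_normD[OF lipschitz UNIV_I UNIV_I]] by simp

lemma continuous_on_f_phibar: "\<phi> \<in> BUC \<alpha> \<Longrightarrow> continuous_on UNIV (\<lambda>s. f (phibar \<phi> s))"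
  by (rule continuous_on_compose2[OF lipschitz_on_continuous_on[OF lipschitz] continuous_on_phibar])
    simp_all

lemma continuous_on_f'_phibar: "\<phi> \<in> BUC \<alpha> \<Longrightarrow> continuous_on UNIV (\<lambda>s. f' (phibar \<phi> s))"
  by (rule continuous_on_compose2[OF continuous_f' continuous_on_phibar]) simp_all

lemma f_phibar_lower_bound:
  assumes \<phi>: "\<phi> \<in> BUC \<alpha>" and T: "T \<ge> 0"
  shows "\<exists>m>0. \<forall>s x. -T \<le> s \<longrightarrow> m \<le> apply_bcontfun (f (phibar \<phi> s)) x"
proof -
  let ?h = "\<lambda>p::real \<times> 'a. apply_bcontfun (f (phibar \<phi> (fst p))) (snd p)"
  have C: "compact ({-T..0} \<times> (UNIV :: 'a set))" by (intro compact_Times compact_space) auto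
  have ne: "{-T..0} \<times> (UNIV :: 'a set) \<noteq> {}" using T by auto
  have "continuous_on ({-T..0} \<times> UNIV) ?h"
    by (rule continuous_on_subset[OF continuous_on_kernel_pair[OF continuous_on_f_phibar[OF \<phi>]]]) simp
  then obtain p0 where p0: "\<And>p. p \<in> {-T..0} \<times> UNIV \<Longrightarrow> ?h p0 \<le> ?h p"
    using continuous_attains_inf[OF C ne] by blast
  have "?h p0 \<le> apply_bcontfun (f (phibar \<phi> s)) x" if "-T \<le> s" for s x
    using p0[of "(min s 0, x)"] that T by (simp add: phibar_min)
  moreover have "?h p0 > 0" by (rule f_pos)
  ultimately show ?thesis by blast
qed

definition delay_integral :: "'a hist \<Rightarrow> 'a \<Rightarrow> real \<Rightarrow> real" where
  "delay_integral \<phi> = kernel_integral (\<lambda>s. f (phibar \<phi> s))"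

lemma delay_integral_has_real_derivative:
  "\<phi> \<in> BUC \<alpha> \<Longrightarrow> (delay_integral \<phi> x has_real_derivative apply_bcontfun (f (phibar \<phi> (-t))) x) (at t)"
  unfolding delay_integral_def by (rule kernel_integral_has_real_derivative[OF continuous_on_f_phibar])

lemma delay_integral_zero [simp]: "delay_integral \<phi> x 0 = 0"
  by (simp add: delay_integral_def)

lemma delay_integral_strict_mono:
  assumes "\<phi> \<in> BUC \<alpha>" "u < v"
  shows "delay_integral \<phi> x u < delay_integral \<phi> x v"
  by (rule DERIV_pos_imp_increasing[OF assms(2)])
    (use delay_integral_has_real_derivative[OF assms(1)] f_pos in blast)

lemma delay_integral_mono:
  "\<phi> \<in> BUC \<alpha> \<Longrightarrow> u \<le> v \<Longrightarrow> delay_integral \<phi> x u \<le> delay_integral \<phi> x v"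
  using delay_integral_strict_mono[of \<phi> u v x] by (cases "u = v") auto

lemma delay_integral_inj:
  "\<phi> \<in> BUC \<alpha> \<Longrightarrow> delay_integral \<phi> x u = delay_integral \<phi> x v \<Longrightarrow> u = v"
  using delay_integral_strict_mono[of \<phi> u v x] delay_integral_strict_mono[of \<phi> v u x]
  by (cases u v rule: linorder_cases) auto

lemma delay_integral_abs_diff_ge:
  assumes \<phi>: "\<phi> \<in> BUC \<alpha>" and low: "\<And>s x. -T \<le> s \<Longrightarrow> c \<le> apply_bcontfun (f (phibar \<phi> s)) x"
    and "a \<le> T" "b \<le> T"
  shows "c * \<bar>b - a\<bar> \<le> \<bar>delay_integral \<phi> x b - delay_integral \<phi> x a\<bar>"
  by (rule mvt_abs_diff_ge[OF delay_integral_has_real_derivative[OF \<phi>]]) (use low assms in auto)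

lemma continuous_on_delay_integral:
  "\<phi> \<in> BUC \<alpha> \<Longrightarrow> continuous_on UNIV \<tau> \<Longrightarrow> continuous_on UNIV (\<lambda>x. delay_integral \<phi> x (\<tau> x))"
  unfolding delay_integral_def by (rule continuous_on_kernel_integral[OF continuous_on_f_phibar])

lemma delay_integral_root_exists:
  assumes \<psi>: "\<psi> \<in> BUC \<alpha>" and c: "c > 0" and T: "T \<ge> 0"
    and low: "\<And>s x. -T \<le> s \<Longrightarrow> c \<le> apply_bcontfun (f (phibar \<psi> s)) x"
    and up: "apply_bcontfun \<epsilon> x < delay_integral \<psi> x T"
  shows "\<exists>t. - norm \<epsilon> / c - 1 \<le> t \<and> t < T \<and> delay_integral \<psi> x t = apply_bcontfun \<epsilon> x"
proof -
  define a where "a = min 0 (apply_bcontfun \<epsilon> x / c) - 1"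
  have "c * (0 - a) \<le> delay_integral \<psi> x 0 - delay_integral \<psi> x a"
    by (rule mvt_diff_ge[OF _ delay_integral_has_real_derivative[OF \<psi>]])
      (use low T in \<open>auto simp: a_def\<close>)
  moreover have "c * a < apply_bcontfun \<epsilon> x"
    using c by (auto simp: a_def algebra_simps min_def zero_le_divide_iff)
  ultimately have Ga: "delay_integral \<psi> x a \<le> apply_bcontfun \<epsilon> x" by simp
  then have "a \<le> T"
    using delay_integral_strict_mono[OF \<psi>, of T a x] up by (meson leI less_le_trans not_less_iff_gr_or_eq)
  moreover have "continuous_on {a..T} (delay_integral \<psi> x)"
    using delay_integral_has_real_derivative[OF \<psi>]
    by (intro continuous_at_imp_continuous_on ballI DERIV_isCont) blast
  ultimately obtain t where t: "a \<le> t" "t \<le> T" "delay_integral \<psi> x t = apply_bcontfun \<epsilon> x"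
    using IVT'[of "delay_integral \<psi> x" a "apply_bcontfun \<epsilon> x" T, OF Ga less_imp_le[OF up]] by blast
  have "- norm \<epsilon> / c \<le> apply_bcontfun \<epsilon> x / c"
    using c abs_apply_bcontfun_le[of \<epsilon> x]
      divide_right_mono[of "- norm \<epsilon>" "apply_bcontfun \<epsilon> x" c] by simp
  then have "- norm \<epsilon> / c - 1 \<le> a" using c by (simp add: a_def)
  moreover have "t \<noteq> T" using t(3) up by auto
  ultimately show ?thesis using t by (intro exI[of _ t]) auto
qed

lemma continuous_on_delay_integral_root:
  assumes \<psi>: "\<psi> \<in> BUC \<alpha>" and c: "c > 0"
    and low: "\<And>s x. -T \<le> s \<Longrightarrow> c \<le> apply_bcontfun (f (phibar \<psi> s)) x"
    and root: "\<And>x. delay_integral \<psi> x (\<tau> x) = apply_bcontfun \<epsilon> x" and le: "\<And>x. \<tau> x \<le> T"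
  shows "continuous_on UNIV \<tau>"
  unfolding continuous_on_iff
proof (intro ballI allI impI)
  fix x0 :: 'a and e :: real assume e: "e > 0"
  have "continuous_on UNIV (\<lambda>x. apply_bcontfun \<epsilon> x - delay_integral \<psi> x (\<tau> x0))"
    by (intro continuous_intros continuous_on_delay_integral[OF \<psi>]) auto
  then obtain d where d: "d > 0" "\<And>x. dist x x0 < d \<Longrightarrow>
      dist (apply_bcontfun \<epsilon> x - delay_integral \<psi> x (\<tau> x0))
           (apply_bcontfun \<epsilon> x0 - delay_integral \<psi> x0 (\<tau> x0)) < c * e"
    using e c unfolding continuous_on_iff by (metis UNIV_I mult_pos_pos)
  have "dist (\<tau> x) (\<tau> x0) < e" if x: "dist x x0 < d" for x
  proof -
    have "c * \<bar>\<tau> x - \<tau> x0\<bar> \<le> \<bar>delay_integral \<psi> x (\<tau> x) - delay_integral \<psi> x (\<tau> x0)\<bar>"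
      by (rule delay_integral_abs_diff_ge[OF \<psi> low le le])
    also have "\<dots> < c * e" using d(2)[OF x] root[of x] root[of x0] by (simp add: dist_real_def)
    finally show ?thesis using c by (simp add: dist_real_def)
  qed
  then show "\<exists>d>0. \<forall>x\<in>UNIV. dist x x0 < d \<longrightarrow> dist (\<tau> x) (\<tau> x0) < e" using d(1) by blast
qed

lemma tauhat_eqI:
  assumes \<psi>: "\<psi> \<in> BUC \<alpha>" and root: "\<And>x. delay_integral \<psi> x (apply_bcontfun \<tau> x) = apply_bcontfun \<epsilon> x"
  shows "tauhat f \<psi> \<epsilon> = \<tau>"
  unfolding tauhat_def
proof (rule the_equality)
  show "\<forall>x. interval_lebesgue_integral lborel (ereal (- apply_bcontfun \<tau> x)) (ereal 0)
          (\<lambda>s. apply_bcontfun (f (phibar \<psi> s)) x) = apply_bcontfun \<epsilon> x"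
    using root by (simp add: delay_integral_def kernel_integral_def)
  fix \<sigma> assume "\<forall>x. interval_lebesgue_integral lborel (ereal (- apply_bcontfun \<sigma> x)) (ereal 0)
          (\<lambda>s. apply_bcontfun (f (phibar \<psi> s)) x) = apply_bcontfun \<epsilon> x"
  then have "delay_integral \<psi> x (apply_bcontfun \<sigma> x) = delay_integral \<psi> x (apply_bcontfun \<tau> x)" for x
    using root by (simp add: delay_integral_def kernel_integral_def)
  then show "\<sigma> = \<tau>" using delay_integral_inj[OF \<psi>] by (blast intro: bcontfun_eqI)
qed

lemma tauhat_solves:
  assumes \<psi>: "\<psi> \<in> BUC \<alpha>" and c: "c > 0" and T: "T \<ge> 0"
    and low: "\<And>s x. -T \<le> s \<Longrightarrow> c \<le> apply_bcontfun (f (phibar \<psi> s)) x"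
    and up: "\<And>x. apply_bcontfun \<epsilon> x < delay_integral \<psi> x T"
  shows "delay_integral \<psi> x (apply_bcontfun (tauhat f \<psi> \<epsilon>) x) = apply_bcontfun \<epsilon> x"
    and "apply_bcontfun (tauhat f \<psi> \<epsilon>) x < T"
    and "- norm \<epsilon> / c - 1 \<le> apply_bcontfun (tauhat f \<psi> \<epsilon>) x"
proof -
  define \<tau> where "\<tau> x = (THE t. delay_integral \<psi> x t = apply_bcontfun \<epsilon> x)" for x
  have \<tau>: "delay_integral \<psi> x (\<tau> x) = apply_bcontfun \<epsilon> x" "- norm \<epsilon> / c - 1 \<le> \<tau> x" "\<tau> x < T" for x
  proof -
    obtain t where t: "- norm \<epsilon> / c - 1 \<le> t" "t < T" "delay_integral \<psi> x t = apply_bcontfun \<epsilon> x"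
      using delay_integral_root_exists[OF \<psi> c T low up] by blast
    moreover have "\<tau> x = t" unfolding \<tau>_def
      by (rule the_equality) (use t delay_integral_inj[OF \<psi>] in metis)+
    ultimately show "delay_integral \<psi> x (\<tau> x) = apply_bcontfun \<epsilon> x" "- norm \<epsilon> / c - 1 \<le> \<tau> x" "\<tau> x < T"
      by auto
  qed
  have "continuous_on UNIV \<tau>"
    by (rule continuous_on_delay_integral_root[OF \<psi> c low \<tau>(1)]) (use \<tau>(3) in \<open>auto intro: less_imp_le\<close>)
  moreover have "bounded (range \<tau>)"
  proof (rule boundedI)
    fix y assume "y \<in> range \<tau>"
    then obtain x where "y = \<tau> x" by blast
    then show "norm y \<le> max \<bar>T\<bar> \<bar>- norm \<epsilon> / c - 1\<bar>" using \<tau>(2,3)[of x] by auto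
  qed
  ultimately have mem: "\<tau> \<in> bcontfun" by (simp add: bcontfun_def)
  have "tauhat f \<psi> \<epsilon> = Bcontfun \<tau>"
    by (rule tauhat_eqI[OF \<psi>]) (simp add: Bcontfun_inverse[OF mem] \<tau>(1))
  then show "delay_integral \<psi> x (apply_bcontfun (tauhat f \<psi> \<epsilon>) x) = apply_bcontfun \<epsilon> x"
    and "apply_bcontfun (tauhat f \<psi> \<epsilon>) x < T"
    and "- norm \<epsilon> / c - 1 \<le> apply_bcontfun (tauhat f \<psi> \<epsilon>) x"
    using \<tau>[of x] by (simp_all add: Bcontfun_inverse[OF mem])
qed


lemma borel_measurable_f_phibar_apply:
  "\<phi> \<in> BUC \<alpha> \<Longrightarrow> (\<lambda>s. apply_bcontfun (f (phibar \<phi> s)) x) \<in> borel_measurable lborel"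
  using borel_measurable_continuous_onI[OF continuous_on_apply_bcontfun_at[OF continuous_on_f_phibar]]
  by (simp add: measurable_lborel1)

lemma ennreal_delay_integral:
  assumes \<phi>: "\<phi> \<in> BUC \<alpha>" and T: "T \<ge> 0"
  shows "ennreal (delay_integral \<phi> x T)
           = (\<integral>\<^sup>+ s. ennreal (indicator {-T..0} s * apply_bcontfun (f (phibar \<phi> s)) x) \<partial>lborel)"
proof -
  let ?g = "\<lambda>s. apply_bcontfun (f (phibar \<phi> s)) x"
  have g: "continuous_on UNIV ?g"
    by (rule continuous_on_apply_bcontfun_at[OF continuous_on_f_phibar[OF \<phi>]])
  have "delay_integral \<phi> x T = integral\<^sup>L lborel (\<lambda>s. indicator {-T..0} s * ?g s)"
    unfolding delay_integral_def kernel_integral_def using T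
    by (subst interval_integral_Icc) (auto simp: set_lebesgue_integral_def)
  moreover have "integrable lborel (\<lambda>s. indicator {-T..0} s * ?g s)"
    using borel_integrable_atLeastAtMost'[OF continuous_on_subset[OF g], of "-T" 0]
    by (simp add: set_integrable_def)
  ultimately show ?thesis
    by (subst nn_integral_eq_integral)
      (auto intro!: AE_I2 less_imp_le[OF f_pos] simp: indicator_def)
qed

lemma delay_integral_le_nn_integral:
  assumes "\<phi> \<in> BUC \<alpha>" "T \<ge> 0"
  shows "ennreal (delay_integral \<phi> x T)
           \<le> set_nn_integral lborel {..0} (\<lambda>s. ennreal (apply_bcontfun (f (\<phi> s)) x))"
  unfolding ennreal_delay_integral[OF assms]
  by (intro nn_integral_mono) (auto simp: indicator_def phibar_def)

lemma nn_integral_le_SUP_delay_integral: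
  assumes \<phi>: "\<phi> \<in> BUC \<alpha>"
  shows "set_nn_integral lborel {..0} (\<lambda>s. ennreal (apply_bcontfun (f (\<phi> s)) x))
           \<le> (SUP n::nat. ennreal (delay_integral \<phi> x (real n)))"
proof -
  define F where "F n s = ennreal (indicator {- real n..0} s * apply_bcontfun (f (phibar \<phi> s)) x)"
    for n :: nat and s
  have inc: "incseq F"
    unfolding incseq_def le_fun_def F_def
    by (auto simp: indicator_def intro!: ennreal_leI less_imp_le[OF f_pos])
  have meas: "F n \<in> borel_measurable lborel" for n
    unfolding F_def using borel_measurable_f_phibar_apply[OF \<phi>, of x] by measurable
  have "set_nn_integral lborel {..0} (\<lambda>s. ennreal (apply_bcontfun (f (\<phi> s)) x))
      \<le> (\<integral>\<^sup>+ s. (SUP n. F n s) \<partial>lborel)"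
  proof (intro nn_integral_mono)
    fix s :: real
    show "ennreal (apply_bcontfun (f (\<phi> s)) x) * indicator {..0} s \<le> (SUP n. F n s)"
    proof (cases "s \<le> 0")
      case True
      then have "ennreal (apply_bcontfun (f (\<phi> s)) x) * indicator {..0} s = F (nat \<lceil>-s\<rceil>) s"
        by (simp add: F_def indicator_def phibar_def) linarith
      then show ?thesis by (metis SUP_upper UNIV_I)
    qed simp
  qed
  also have "\<dots> = (SUP n. integral\<^sup>N lborel (F n))"
    by (rule nn_integral_monotone_convergence_SUP[OF inc meas])
  also have "\<dots> = (SUP n::nat. ennreal (delay_integral \<phi> x (real n)))"
    unfolding F_def using ennreal_delay_integral[OF \<phi>] by simp
  finally show ?thesis .
qed

lemma in_DtauI:
  assumes "\<phi> \<in> BUC \<alpha>" "T \<ge> 0" "\<And>x. apply_bcontfun \<delta> x < delay_integral \<phi> x T"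
  shows "(\<phi>, \<delta>) \<in> Dtau f \<alpha>"
proof -
  have "ennreal (apply_bcontfun \<delta> x)
          < set_nn_integral lborel {..0} (\<lambda>s. ennreal (apply_bcontfun (f (\<phi> s)) x))"
    if "0 < apply_bcontfun \<delta> x" for x
  proof -
    have "ennreal (apply_bcontfun \<delta> x) < ennreal (delay_integral \<phi> x T)"
      using that assms(3)[of x] by (simp add: ennreal_less_iff)
    also have "\<dots> \<le> set_nn_integral lborel {..0} (\<lambda>s. ennreal (apply_bcontfun (f (\<phi> s)) x))"
      by (rule delay_integral_le_nn_integral[OF assms(1,2)])
    finally show ?thesis .
  qed
  then show ?thesis using assms(1) by (simp add: Dtau_def)
qed

text \<open>Pointwise, membership in the domain means that the level \<open>\<delta> x\<close> is eventually exceeded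
  by the integral; compactness of the space makes the horizon uniform.\<close>
lemma Dtau_uniform_horizon:
  assumes pD: "(\<phi>, \<delta>) \<in> Dtau f \<alpha>"
  shows "\<exists>T>0. \<forall>x. apply_bcontfun \<delta> x < delay_integral \<phi> x T"
proof -
  have \<phi>: "\<phi> \<in> BUC \<alpha>" using pD by (simp add: Dtau_def)
  have "\<exists>n::nat. apply_bcontfun \<delta> x < delay_integral \<phi> x (real n)" for x
  proof (cases "apply_bcontfun \<delta> x > 0")
    case True
    then have "ennreal (apply_bcontfun \<delta> x)
        < set_nn_integral lborel {..0} (\<lambda>s. ennreal (apply_bcontfun (f (\<phi> s)) x))"
      using pD by (simp add: Dtau_def)
    also have "\<dots> \<le> (SUP n::nat. ennreal (delay_integral \<phi> x (real n)))"
      by (rule nn_integral_le_SUP_delay_integral[OF \<phi>])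
    finally obtain n :: nat where "ennreal (apply_bcontfun \<delta> x) < ennreal (delay_integral \<phi> x (real n))"
      by (auto simp: less_SUP_iff)
    then show ?thesis using True by (auto simp: ennreal_less_iff)
  next
    case False
    then show ?thesis
      using delay_integral_strict_mono[OF \<phi>, of 0 "real 1" x] by (intro exI[of _ 1]) auto
  qed
  then have cov: "UNIV \<subseteq> (\<Union>n. {x. apply_bcontfun \<delta> x < delay_integral \<phi> x (real n)})" by auto
  have "open {x. apply_bcontfun \<delta> x < delay_integral \<phi> x (real n)}" for n :: nat
    using continuous_on_delay_integral[OF \<phi> continuous_on_const]
    by (intro open_Collect_less) (auto simp: continuous_on_eq_continuous_at)
  then obtain C where C: "finite C"
      "UNIV \<subseteq> (\<Union>n\<in>C. {x. apply_bcontfun \<delta> x < delay_integral \<phi> x (real n)})"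
    using compactE_image[OF compact_space _ cov] by metis
  define T where "T = real (Max (insert 0 C)) + 1"
  have "apply_bcontfun \<delta> x < delay_integral \<phi> x T" for x
  proof -
    obtain n where n: "n \<in> C" "apply_bcontfun \<delta> x < delay_integral \<phi> x (real n)" using C(2) by blast
    then have "n \<le> Max (insert 0 C)" using C(1) by (intro Max_ge) auto
    then have "real n \<le> T" by (simp add: T_def)
    then show ?thesis using n(2) delay_integral_mono[OF \<phi>, of "real n" T x] by linarith
  qed
  then show ?thesis by (intro exI[of _ T]) (simp add: T_def)
qed

lemma Dtau_margin:
  assumes pD: "(\<phi>, \<delta>) \<in> Dtau f \<alpha>"
  obtains T m \<eta> where "T > 0" "m > 0" "\<eta> > 0"
    "\<And>s x. -T \<le> s \<Longrightarrow> m \<le> apply_bcontfun (f (phibar \<phi> s)) x"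
    "\<And>x. apply_bcontfun \<delta> x + \<eta> \<le> delay_integral \<phi> x T"
proof -
  have \<phi>: "\<phi> \<in> BUC \<alpha>" using pD by (simp add: Dtau_def)
  obtain T where T: "T > 0" "\<And>x. apply_bcontfun \<delta> x < delay_integral \<phi> x T"
    using Dtau_uniform_horizon[OF pD] by blast
  let ?d = "\<lambda>x. delay_integral \<phi> x T - apply_bcontfun \<delta> x"
  have "continuous_on UNIV ?d"
    by (intro continuous_intros continuous_on_delay_integral[OF \<phi>]) auto
  then obtain x0 where x0: "\<And>y. ?d x0 \<le> ?d y"
    using continuous_attains_inf[OF compact_space] by blast
  obtain m where "m > 0" "\<And>s x. -T \<le> s \<Longrightarrow> m \<le> apply_bcontfun (f (phibar \<phi> s)) x"
    using f_phibar_lower_bound[OF \<phi>, of T] T by auto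
  moreover have "?d x0 > 0" using T(2)[of x0] by simp
  moreover have "apply_bcontfun \<delta> x + ?d x0 \<le> delay_integral \<phi> x T" for x
    using x0[of x] by simp
  ultimately show ?thesis using that T by blast
qed

lemma uniform_derivative_estimate:
  assumes C: "compact C" and e: "e > 0"
  shows "\<exists>\<rho>>0. \<forall>z\<in>C. \<forall>y. norm (y - z) < \<rho> \<longrightarrow>
     norm (f' y - f' z) < e \<and> norm (f y - f z - blinfun_apply (f' z) (y - z)) \<le> e * norm (y - z)"
proof -
  obtain \<rho> where \<rho>: "\<rho> > 0" "\<And>z y. z \<in> C \<Longrightarrow> dist y z < \<rho> \<Longrightarrow> dist (f' y) (f' z) < e"
    using uniformly_continuous_near_compact[OF continuous_f' C e] by blast
  have "norm (f y - f z - blinfun_apply (f' z) (y - z)) \<le> e * norm (y - z)"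
    if z: "z \<in> C" and y: "norm (y - z) < \<rho>" for z y
  proof -
    let ?F = "\<lambda>w. f w - blinfun_apply (f' z) w"
    have der: "(?F has_derivative (\<lambda>v. blinfun_apply (f' w - f' z) v)) (at w within ball z \<rho>)" for w
      using has_derivative_diff[OF has_derivative_at_withinI[OF f_has_derivative]
          bounded_linear_imp_has_derivative[OF blinfun.bounded_linear_right]]
      by (simp add: blinfun.diff_left)
    have bound: "onorm (blinfun_apply (f' w - f' z)) \<le> e" if "w \<in> ball z \<rho>" for w
    proof -
      have "norm (f' w - f' z) < e" using \<rho>(2)[OF z, of w] that by (simp add: dist_norm norm_minus_commute)
      then show ?thesis by (simp add: norm_blinfun.rep_eq[symmetric])
    qed
    have "norm (?F y - ?F z) \<le> e * norm (y - z)"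
      by (rule differentiable_bound[OF convex_ball der bound])
        (use y \<rho>(1) in \<open>auto simp: dist_norm norm_minus_commute\<close>)
    then show ?thesis by (simp add: blinfun.diff_right algebra_simps)
  qed
  then show ?thesis using \<rho> by (force simp: dist_norm)
qed

definition lin_integral :: "'a hist \<Rightarrow> 'a hist \<Rightarrow> 'a \<Rightarrow> real \<Rightarrow> real" where
  "lin_integral \<phi> h = kernel_integral (\<lambda>s. blinfun_apply (f' (phibar \<phi> s)) (phibar h s))"

lemma continuous_on_lin_kernel:
  "\<phi> \<in> BUC \<alpha> \<Longrightarrow> continuous_on UNIV (phibar h) \<Longrightarrow>
   continuous_on UNIV (\<lambda>s. blinfun_apply (f' (phibar \<phi> s)) (phibar h s))"
  by (intro continuous_intros continuous_on_f'_phibar)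

lemma lin_integral_has_real_derivative:
  "\<phi> \<in> BUC \<alpha> \<Longrightarrow> continuous_on UNIV (phibar h) \<Longrightarrow>
   (lin_integral \<phi> h x has_real_derivative
      apply_bcontfun (blinfun_apply (f' (phibar \<phi> (-t))) (phibar h (-t))) x) (at t)"
  unfolding lin_integral_def by (rule kernel_integral_has_real_derivative[OF continuous_on_lin_kernel])

text \<open>The derivative of \<open>tauhat\<close>, obtained by differentiating the defining identity
  \<open>delay_integral \<phi> x (\<tau> x) = \<delta> x\<close> implicitly.\<close>
definition dtau :: "'a hist \<times> ('a, real) bcontfun \<Rightarrow> 'a hist \<times> ('a, real) bcontfun \<Rightarrow> ('a, real) bcontfun" where
  "dtau p h = Bcontfun (\<lambda>x.
     (apply_bcontfun (snd h) x - lin_integral (fst p) (fst h) x (apply_bcontfun (tauhat f (fst p) (snd p)) x))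
     / apply_bcontfun (f (phibar (fst p) (- apply_bcontfun (tauhat f (fst p) (snd p)) x))) x)"

lemma apply_dtau:
  assumes \<phi>: "\<phi> \<in> BUC \<alpha>" and h: "continuous_on UNIV (phibar (fst h))"
  shows "apply_bcontfun (dtau (\<phi>, \<delta>) h) x
    = (apply_bcontfun (snd h) x - lin_integral \<phi> (fst h) x (apply_bcontfun (tauhat f \<phi> \<delta>) x))
      / apply_bcontfun (f (phibar \<phi> (- apply_bcontfun (tauhat f \<phi> \<delta>) x))) x"
proof -
  let ?\<tau> = "apply_bcontfun (tauhat f \<phi> \<delta>)"
  have "continuous_on UNIV (\<lambda>x. lin_integral \<phi> (fst h) x (?\<tau> x))"
    unfolding lin_integral_def by (rule continuous_on_kernel_integral[OF continuous_on_lin_kernel[OF \<phi> h]]) simp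
  moreover have "continuous_on UNIV (\<lambda>x. apply_bcontfun (f (phibar \<phi> (- ?\<tau> x))) x)"
    using continuous_on_kernel_diagonal[OF continuous_on_f_phibar[OF \<phi>]
        continuous_on_minus[OF continuous_on_apply_bcontfun]] .
  ultimately have "continuous_on UNIV (\<lambda>x. (apply_bcontfun (snd h) x - lin_integral \<phi> (fst h) x (?\<tau> x))
      / apply_bcontfun (f (phibar \<phi> (- ?\<tau> x))) x)"
    by (intro continuous_intros) (auto simp: f_pos[THEN less_imp_neq, THEN not_sym])
  then show ?thesis
    unfolding dtau_def by (simp add: Bcontfun_inverse[OF continuous_on_bcontfun_compact[OF compact_space]])
qed

end

locale Dtau_point = delay_setting +
  fixes \<phi> :: "'a hist" and \<delta> :: "('a, real) bcontfun" and T m \<eta> :: real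
  assumes in_Dtau: "(\<phi>, \<delta>) \<in> Dtau f \<alpha>"
    and T_pos: "T > 0" and m_pos: "m > 0" and \<eta>_pos: "\<eta> > 0"
    and f_phibar_ge: "\<And>s x. -T \<le> s \<Longrightarrow> m \<le> apply_bcontfun (f (phibar \<phi> s)) x"
    and delta_margin: "\<And>x. apply_bcontfun \<delta> x + \<eta> \<le> delay_integral \<phi> x T"
begin

lemma phi_BUC: "\<phi> \<in> BUC \<alpha>"
  using in_Dtau by (simp add: Dtau_def)

lemma point_Xsp: "(\<phi>, \<delta>) \<in> Xsp \<alpha>"
  using phi_BUC by (simp add: Xsp_def)

definition E :: real where "E = exp (\<alpha> * T)"

lemma E_pos: "E > 0"
  by (simp add: E_def)

abbreviation tau :: "'a \<Rightarrow> real" where "tau \<equiv> apply_bcontfun (tauhat f \<phi> \<delta>)"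

lemma delta_below_horizon: "apply_bcontfun \<delta> x < delay_integral \<phi> x T"
  using delta_margin[of x] \<eta>_pos by linarith

lemma tau: "delay_integral \<phi> x (tau x) = apply_bcontfun \<delta> x" "tau x < T" "- norm \<delta> / m - 1 \<le> tau x"
  using tauhat_solves[OF phi_BUC m_pos less_imp_le[OF T_pos] f_phibar_ge delta_below_horizon] by auto

definition A :: real where "A = T + norm \<delta> / m + 1"

lemma A_pos: "A > 0"
  using T_pos m_pos by (simp add: A_def add_pos_nonneg)

lemma abs_tau_le: "\<bar>tau x\<bar> \<le> A"
proof -
  have "norm \<delta> / m \<ge> 0" using m_pos by simp
  then show ?thesis using tau(2,3)[of x] T_pos by (auto simp: A_def abs_if)
qed

lemma f_phibar_tau_ge: "m \<le> apply_bcontfun (f (phibar \<phi> (- tau x))) x"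
  using f_phibar_ge tau(2)[of x] by simp

lemma f'_phibar_bounded: "\<exists>B>0. \<forall>s. -T \<le> s \<longrightarrow> norm (f' (phibar \<phi> s)) \<le> B"
proof -
  have "compact (f' ` phibar \<phi> ` {-T..0})"
    by (rule compact_continuous_image[OF continuous_on_subset[OF continuous_f'] compact_phibar_image[OF phi_BUC]])
      simp
  then obtain B where B: "B > 0" "\<And>y. y \<in> f' ` phibar \<phi> ` {-T..0} \<Longrightarrow> norm y \<le> B"
    by (metis compact_imp_bounded bounded_pos)
  have "norm (f' (phibar \<phi> s)) \<le> B" if "-T \<le> s" for s
    using B(2) phibar_in_image[OF less_imp_le[OF T_pos] that] by blast
  then show ?thesis using B(1) by blast
qed

definition F :: real where "F = (SOME B. B > 0 \<and> (\<forall>s. -T \<le> s \<longrightarrow> norm (f' (phibar \<phi> s)) \<le> B))"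

lemma F: "F > 0" "\<And>s. -T \<le> s \<Longrightarrow> norm (f' (phibar \<phi> s)) \<le> F"
  using someI_ex[OF f'_phibar_bounded] unfolding F_def[symmetric] by auto

definition rdist :: "'a hist \<times> ('a, real) bcontfun \<Rightarrow> real" where
  "rdist q = pnorm \<alpha> (pminus q (\<phi>, \<delta>))"

lemma rdist_nonneg: "q \<in> Xsp \<alpha> \<Longrightarrow> rdist q \<ge> 0"
  unfolding rdist_def by (intro pnorm_nonneg Xsp_weighted_bounded_pminus point_Xsp)

lemma norm_phibar_diff_le:
  assumes "q \<in> Xsp \<alpha>" "-T \<le> s"
  shows "norm (phibar (fst q) s - phibar \<phi> s) \<le> E * rdist q"
  using norm_phibar_le_pnorm[OF alpha_nonneg Xsp_weighted_bounded_pminus[OF assms(1) point_Xsp]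
      less_imp_le[OF T_pos] assms(2)]
  by (simp add: fst_pminus phibar_diff E_def rdist_def)

lemma abs_snd_diff_le: "q \<in> Xsp \<alpha> \<Longrightarrow> \<bar>apply_bcontfun (snd q) x - apply_bcontfun \<delta> x\<bar> \<le> rdist q"
  using abs_snd_le_pnorm[OF Xsp_weighted_bounded_pminus[OF _ point_Xsp]]
  by (simp add: snd_pminus rdist_def)

lemma abs_f_phibar_diff_le:
  assumes "q \<in> Xsp \<alpha>" "-T \<le> s"
  shows "\<bar>apply_bcontfun (f (phibar (fst q) s)) x - apply_bcontfun (f (phibar \<phi> s)) x\<bar> \<le> Lf * E * rdist q"
  using order_trans[OF abs_f_apply_diff_le mult_left_mono[OF norm_phibar_diff_le[OF assms] Lf_nonneg]]
  by (simp add: mult.assoc)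

lemma abs_delay_integral_diff_le:
  assumes q: "q \<in> Xsp \<alpha>" and t: "t \<le> T"
  shows "\<bar>delay_integral (fst q) x t - delay_integral \<phi> x t\<bar> \<le> Lf * E * rdist q * \<bar>t\<bar>"
proof -
  have "\<bar>(delay_integral (fst q) x t - delay_integral \<phi> x t)
      - (delay_integral (fst q) x 0 - delay_integral \<phi> x 0)\<bar> \<le> (Lf * E * rdist q) * \<bar>t - 0\<bar>"
  proof (rule mvt_abs_diff_le)
    fix u
    show "((\<lambda>t. delay_integral (fst q) x t - delay_integral \<phi> x t) has_real_derivative
        apply_bcontfun (f (phibar (fst q) (-u))) x - apply_bcontfun (f (phibar \<phi> (-u))) x) (at u)"
      using q by (intro DERIV_diff delay_integral_has_real_derivative phi_BUC) (auto simp: Xsp_def)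
  next
    fix u assume "min 0 t \<le> u" "u \<le> max 0 t"
    then show "\<bar>apply_bcontfun (f (phibar (fst q) (-u))) x - apply_bcontfun (f (phibar \<phi> (-u))) x\<bar>
        \<le> Lf * E * rdist q"
      using t T_pos by (intro abs_f_phibar_diff_le[OF q]) auto
  qed
  then show ?thesis by simp
qed

definition near :: "('a hist \<times> ('a, real) bcontfun \<Rightarrow> bool) \<Rightarrow> bool" where
  "near P \<longleftrightarrow> (\<exists>d>0. \<forall>q\<in>Xsp \<alpha>. rdist q < d \<longrightarrow> P q)"

lemma near_rdist_less: "c > 0 \<Longrightarrow> near (\<lambda>q. rdist q < c)"
  unfolding near_def by blast

lemma near_conj: "near P \<Longrightarrow> near Q \<Longrightarrow> near (\<lambda>q. P q \<and> Q q)"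
  unfolding near_def by (metis min_less_iff_conj)

lemma near_mono: "near P \<Longrightarrow> (\<And>q. q \<in> Xsp \<alpha> \<Longrightarrow> P q \<Longrightarrow> Q q) \<Longrightarrow> near Q"
  unfolding near_def by blast

lemma near_Xsp: "near P \<Longrightarrow> \<exists>d>0. \<forall>q\<in>Xsp \<alpha>. pnorm \<alpha> (pminus q (\<phi>, \<delta>)) < d \<longrightarrow> P q"
  unfolding near_def rdist_def by blast

lemma near_Dtau: "near P \<Longrightarrow> \<exists>d>0. \<forall>q\<in>Dtau f \<alpha>. pnorm \<alpha> (pminus q (\<phi>, \<delta>)) < d \<longrightarrow> P q"
  using near_Xsp Dtau_subset_Xsp by blast

lemma near_scaled_rdist_less:
  assumes "K \<ge> 0" "c > 0"
  shows "near (\<lambda>q. K * rdist q < c)"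
proof (rule near_mono[OF near_rdist_less])
  show "c / (K + 1) > 0" using assms by simp
  fix q assume "rdist q < c / (K + 1)" "q \<in> Xsp \<alpha>"
  then have "rdist q * (K + 1) < c" "rdist q \<ge> 0" using assms by (simp_all add: pos_less_divide_eq rdist_nonneg)
  moreover have "K * rdist q \<le> rdist q * (K + 1)" using \<open>rdist q \<ge> 0\<close> by (simp add: algebra_simps)
  ultimately show "K * rdist q < c" by linarith
qed

text \<open>Perturbations small enough for the horizon \<open>T\<close> and the lower bound \<open>m / 2\<close> to remain valid.\<close>
definition admissible :: "'a hist \<times> ('a, real) bcontfun \<Rightarrow> bool" where
  "admissible q \<longleftrightarrow> q \<in> Xsp \<alpha> \<and> rdist q * (1 + T * Lf * E) < \<eta> \<and> Lf * E * rdist q \<le> m / 2"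

lemma near_admissible: "near admissible"
proof -
  have "near (\<lambda>q. (1 + T * Lf * E) * rdist q < \<eta> \<and> Lf * E * rdist q < m / 2)"
    using T_pos Lf_nonneg E_pos m_pos \<eta>_pos
    by (intro near_conj near_scaled_rdist_less) (auto simp: add_nonneg_nonneg)
  then show ?thesis by (rule near_mono) (auto simp: admissible_def mult.commute)
qed

lemma admissible_f_phibar_ge:
  "admissible q \<Longrightarrow> -T \<le> s \<Longrightarrow> m / 2 \<le> apply_bcontfun (f (phibar (fst q) s)) x"
  using abs_f_phibar_diff_le[of q s x] f_phibar_ge[of s x] by (auto simp: admissible_def)

lemma admissible_below_horizon:
  assumes "admissible q"
  shows "apply_bcontfun (snd q) x < delay_integral (fst q) x T"
proof -
  have q: "q \<in> Xsp \<alpha>" "rdist q + Lf * E * rdist q * T < \<eta>"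
    using assms by (auto simp: admissible_def algebra_simps)
  show ?thesis
    using abs_snd_diff_le[OF q(1), of x] abs_delay_integral_diff_le[OF q(1) order_refl, of x]
      delta_margin[of x] q(2) T_pos by (auto simp: abs_le_iff)
qed

lemma admissible_in_Dtau: "admissible q \<Longrightarrow> q \<in> Dtau f \<alpha>"
  using in_DtauI[of "fst q" T "snd q"] admissible_below_horizon T_pos
  by (cases q) (auto simp: admissible_def Xsp_def)

definition Ctau :: real where "Ctau = 2 * (1 + A * Lf * E) / m"

lemma Ctau_pos: "Ctau > 0"
  unfolding Ctau_def using A_pos E_pos Lf_nonneg m_pos by (simp add: add_pos_nonneg)

lemma admissible_tauhat:
  assumes adm: "admissible q"
  shows "delay_integral (fst q) x (apply_bcontfun (tauhat f (fst q) (snd q)) x) = apply_bcontfun (snd q) x"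
    and "apply_bcontfun (tauhat f (fst q) (snd q)) x < T"
    and "\<bar>apply_bcontfun (tauhat f (fst q) (snd q)) x - tau x\<bar> \<le> Ctau * rdist q"
proof -
  have q: "q \<in> Xsp \<alpha>" "fst q \<in> BUC \<alpha>" using adm by (auto simp: admissible_def Xsp_def)
  note S = tauhat_solves[OF q(2) _ less_imp_le[OF T_pos] admissible_f_phibar_ge[OF adm]
      admissible_below_horizon[OF adm]]
  let ?\<sigma> = "apply_bcontfun (tauhat f (fst q) (snd q)) x"
  show eq: "delay_integral (fst q) x ?\<sigma> = apply_bcontfun (snd q) x" and lt: "?\<sigma> < T"
    using S m_pos by auto
  have "m / 2 * \<bar>tau x - ?\<sigma>\<bar> \<le> \<bar>delay_integral (fst q) x (tau x) - delay_integral (fst q) x ?\<sigma>\<bar>"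
    by (rule delay_integral_abs_diff_ge[OF q(2) admissible_f_phibar_ge[OF adm]])
      (use lt tau(2)[of x] in auto)
  also have "\<dots> \<le> \<bar>delay_integral (fst q) x (tau x) - delay_integral \<phi> x (tau x)\<bar>
      + \<bar>apply_bcontfun (snd q) x - apply_bcontfun \<delta> x\<bar>"
    using eq tau(1)[of x] by linarith
  also have "\<dots> \<le> Lf * E * rdist q * A + rdist q"
    using abs_delay_integral_diff_le[OF q(1) less_imp_le[OF tau(2)[of x]], of x] abs_snd_diff_le[OF q(1), of x]
      mult_left_mono[OF abs_tau_le[of x], of "Lf * E * rdist q"] Lf_nonneg E_pos rdist_nonneg[OF q(1)]
    by simp
  finally have "m / 2 * \<bar>tau x - ?\<sigma>\<bar> \<le> rdist q * (1 + A * Lf * E)" by (simp add: algebra_simps)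
  then show "\<bar>?\<sigma> - tau x\<bar> \<le> Ctau * rdist q"
    using m_pos by (simp add: Ctau_def field_simps abs_minus_commute)
qed


lemma abs_lin_kernel_le:
  assumes h: "h \<in> Xsp \<alpha>" and s: "-T \<le> s"
  shows "\<bar>apply_bcontfun (blinfun_apply (f' (phibar \<phi> s)) (phibar (fst h) s)) x\<bar> \<le> F * E * pnorm \<alpha> h"
proof -
  have "\<bar>apply_bcontfun (blinfun_apply (f' (phibar \<phi> s)) (phibar (fst h) s)) x\<bar>
      \<le> norm (f' (phibar \<phi> s)) * norm (phibar (fst h) s)"
    using abs_apply_bcontfun_le norm_blinfun order_trans by blast
  also have "\<dots> \<le> F * (E * pnorm \<alpha> h)"
    using F(1) F(2)[OF s] norm_phibar_le_pnorm[OF alpha_nonneg Xsp_weighted_bounded[OF h] less_imp_le[OF T_pos] s]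
    by (intro mult_mono) (auto simp: E_def)
  finally show ?thesis by (simp add: mult.assoc)
qed

lemma abs_lin_integral_le:
  assumes h: "h \<in> Xsp \<alpha>" and t: "t \<le> T"
  shows "\<bar>lin_integral \<phi> (fst h) x t\<bar> \<le> F * E * pnorm \<alpha> h * \<bar>t\<bar>"
  unfolding lin_integral_def
  by (rule abs_kernel_integral_le[OF continuous_on_lin_kernel[OF phi_BUC Xsp_continuous_on_phibar[OF h]]])
    (use t T_pos in \<open>auto intro!: abs_lin_kernel_le[OF h]\<close>)

lemma lin_integral_lincomb:
  assumes "continuous_on UNIV (phibar g)" "continuous_on UNIV (phibar h)"
  shows "lin_integral \<phi> (\<lambda>t. a *\<^sub>R g t + b *\<^sub>R h t) x t = a * lin_integral \<phi> g x t + b * lin_integral \<phi> h x t"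
proof -
  have "(\<lambda>s. blinfun_apply (f' (phibar \<phi> s)) (phibar (\<lambda>t. a *\<^sub>R g t + b *\<^sub>R h t) s))
      = (\<lambda>s. a *\<^sub>R blinfun_apply (f' (phibar \<phi> s)) (phibar g s) + b *\<^sub>R blinfun_apply (f' (phibar \<phi> s)) (phibar h s))"
    by (simp add: phibar_add phibar_scaleR blinfun.add_right blinfun.scaleR_right)
  then show ?thesis
    unfolding lin_integral_def
    using kernel_integral_lincomb[OF continuous_on_lin_kernel[OF phi_BUC assms(1)]
        continuous_on_lin_kernel[OF phi_BUC assms(2)]] by simp
qed

lemma apply_dtau_point:
  "h \<in> Xsp \<alpha> \<Longrightarrow> apply_bcontfun (dtau (\<phi>, \<delta>) h) x
     = (apply_bcontfun (snd h) x - lin_integral \<phi> (fst h) x (tau x)) / apply_bcontfun (f (phibar \<phi> (- tau x))) x"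
  by (rule apply_dtau[OF phi_BUC Xsp_continuous_on_phibar])

lemma dtau_padd:
  assumes a: "a \<in> Xsp \<alpha>" and b: "b \<in> Xsp \<alpha>"
  shows "dtau (\<phi>, \<delta>) (padd a b) = dtau (\<phi>, \<delta>) a + dtau (\<phi>, \<delta>) b"
proof (rule bcontfun_eqI)
  fix x
  note ca = Xsp_continuous_on_phibar[OF a] and cb = Xsp_continuous_on_phibar[OF b]
  have "continuous_on UNIV (phibar (fst (padd a b)))"
    using continuous_on_add[OF ca cb] by (simp add: padd_def phibar_add[abs_def])
  moreover have "lin_integral \<phi> (fst (padd a b)) x t = lin_integral \<phi> (fst a) x t + lin_integral \<phi> (fst b) x t" for t
    using lin_integral_lincomb[OF ca cb, of 1 1] by (simp add: padd_def)
  ultimately show "apply_bcontfun (dtau (\<phi>, \<delta>) (padd a b)) x = apply_bcontfun (dtau (\<phi>, \<delta>) a + dtau (\<phi>, \<delta>) b) x"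
    using apply_dtau_point[OF a, of x] apply_dtau_point[OF b, of x] apply_dtau[OF phi_BUC, of "padd a b" \<delta> x]
    by (simp add: padd_def add_divide_distrib[symmetric])
qed

lemma dtau_pscale:
  assumes a: "a \<in> Xsp \<alpha>"
  shows "dtau (\<phi>, \<delta>) (pscale c a) = c *\<^sub>R dtau (\<phi>, \<delta>) a"
proof (rule bcontfun_eqI)
  fix x
  note ca = Xsp_continuous_on_phibar[OF a]
  have "continuous_on UNIV (phibar (fst (pscale c a)))"
    using continuous_on_scaleR[OF continuous_on_const ca, of c] by (simp add: pscale_def phibar_scaleR[abs_def])
  moreover have "lin_integral \<phi> (fst (pscale c a)) x t = c * lin_integral \<phi> (fst a) x t" for t
    using lin_integral_lincomb[OF ca ca, of c 0] by (simp add: pscale_def)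
  ultimately show "apply_bcontfun (dtau (\<phi>, \<delta>) (pscale c a)) x = apply_bcontfun (c *\<^sub>R dtau (\<phi>, \<delta>) a) x"
    using apply_dtau_point[OF a, of x] apply_dtau[OF phi_BUC, of "pscale c a" \<delta> x]
    by (simp add: pscale_def right_diff_distrib[symmetric])
qed

lemma abs_dtau_numerator_le:
  assumes h: "h \<in> Xsp \<alpha>"
  shows "\<bar>apply_bcontfun (snd h) x - lin_integral \<phi> (fst h) x (tau x)\<bar> \<le> (1 + F * E * A) * pnorm \<alpha> h"
proof -
  have "\<bar>lin_integral \<phi> (fst h) x (tau x)\<bar> \<le> F * E * pnorm \<alpha> h * \<bar>tau x\<bar>"
    by (rule abs_lin_integral_le[OF h less_imp_le[OF tau(2)]])
  also have "\<dots> \<le> F * E * pnorm \<alpha> h * A"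
    using F(1) E_pos pnorm_nonneg[OF Xsp_weighted_bounded[OF h]] abs_tau_le[of x]
    by (intro mult_left_mono) auto
  finally show ?thesis using abs_snd_le_pnorm[OF Xsp_weighted_bounded[OF h], of x] by (simp add: algebra_simps)
qed

lemma bounded_linear_X_dtau: "bounded_linear_X \<alpha> (dtau (\<phi>, \<delta>))"
proof -
  have "norm (dtau (\<phi>, \<delta>) h) \<le> (1 + F * E * A) / m * pnorm \<alpha> h" if h: "h \<in> Xsp \<alpha>" for h
  proof (rule norm_bound)
    fix x
    show "norm (apply_bcontfun (dtau (\<phi>, \<delta>) h) x) \<le> (1 + F * E * A) / m * pnorm \<alpha> h"
      using abs_divide_le_divide[OF abs_dtau_numerator_le[OF h] f_phibar_tau_ge m_pos]
      by (simp add: apply_dtau_point[OF h])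
  qed
  then show ?thesis
    unfolding bounded_linear_X_def using dtau_padd dtau_pscale by blast
qed


definition f_near :: "real \<Rightarrow> 'a hist \<times> ('a, real) bcontfun \<Rightarrow> bool" where
  "f_near e q \<longleftrightarrow> (\<forall>s. -T \<le> s \<longrightarrow> norm (f' (phibar (fst q) s) - f' (phibar \<phi> s)) < e \<and>
    norm (f (phibar (fst q) s) - f (phibar \<phi> s) - blinfun_apply (f' (phibar \<phi> s)) (phibar (fst q) s - phibar \<phi> s))
      \<le> e * norm (phibar (fst q) s - phibar \<phi> s))"

definition shift_small :: "real \<Rightarrow> 'a hist \<times> ('a, real) bcontfun \<Rightarrow> bool" where
  "shift_small e q \<longleftrightarrow> (\<forall>x u. \<bar>u - tau x\<bar> \<le> Ctau * rdist q \<longrightarrow>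
    \<bar>apply_bcontfun (f (phibar \<phi> (-u))) x - apply_bcontfun (f (phibar \<phi> (- tau x))) x\<bar> \<le> e)"

lemma near_f_near:
  assumes e: "e > 0"
  shows "near (f_near e)"
proof -
  obtain \<rho> where \<rho>: "\<rho> > 0" "\<And>z y. z \<in> phibar \<phi> ` {-T..0} \<Longrightarrow> norm (y - z) < \<rho> \<Longrightarrow>
      norm (f' y - f' z) < e \<and> norm (f y - f z - blinfun_apply (f' z) (y - z)) \<le> e * norm (y - z)"
    using uniform_derivative_estimate[OF compact_phibar_image[OF phi_BUC] e] by blast
  have "near (\<lambda>q. E * rdist q < \<rho>)" using E_pos \<rho>(1) by (intro near_scaled_rdist_less) auto
  then show ?thesis
  proof (rule near_mono)
    fix q assume q: "q \<in> Xsp \<alpha>" "E * rdist q < \<rho>"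
    show "f_near e q"
      unfolding f_near_def
    proof (intro allI impI)
      fix s assume s: "-T \<le> s"
      have "norm (phibar (fst q) s - phibar \<phi> s) < \<rho>"
        using norm_phibar_diff_le[OF q(1) s] q(2) by linarith
      then show "norm (f' (phibar (fst q) s) - f' (phibar \<phi> s)) < e \<and>
        norm (f (phibar (fst q) s) - f (phibar \<phi> s) - blinfun_apply (f' (phibar \<phi> s)) (phibar (fst q) s - phibar \<phi> s))
          \<le> e * norm (phibar (fst q) s - phibar \<phi> s)"
        by (rule \<rho>(2)[OF phibar_in_image[OF less_imp_le[OF T_pos] s]])
    qed
  qed
qed

lemma near_shift_small:
  assumes e: "e > 0"
  shows "near (shift_small e)"
proof -
  obtain \<rho> where \<rho>: "\<rho> > 0"
      "\<And>z y. z \<in> {-T..A} \<Longrightarrow> dist y z < \<rho> \<Longrightarrow> dist (f (phibar \<phi> y)) (f (phibar \<phi> z)) < e"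
    using uniformly_continuous_near_compact[OF continuous_on_f_phibar[OF phi_BUC] compact_Icc e] by blast
  have "near (\<lambda>q. Ctau * rdist q < \<rho>)" using Ctau_pos \<rho>(1) by (intro near_scaled_rdist_less) auto
  then show ?thesis
  proof (rule near_mono)
    fix q assume q: "q \<in> Xsp \<alpha>" "Ctau * rdist q < \<rho>"
    show "shift_small e q"
      unfolding shift_small_def
    proof (intro allI impI)
      fix x u assume u: "\<bar>u - tau x\<bar> \<le> Ctau * rdist q"
      have "- tau x \<in> {-T..A}" using tau(2)[of x] abs_tau_le[of x] by auto
      moreover have "dist (-u) (- tau x) < \<rho>" using u q(2) by (simp add: dist_real_def abs_minus_commute)
      ultimately have "norm (f (phibar \<phi> (-u)) - f (phibar \<phi> (- tau x))) < e"
        using \<rho>(2) by (simp add: dist_norm)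
      then show "\<bar>apply_bcontfun (f (phibar \<phi> (-u))) x - apply_bcontfun (f (phibar \<phi> (- tau x))) x\<bar> \<le> e"
        using abs_apply_bcontfun_le[of "f (phibar \<phi> (-u)) - f (phibar \<phi> (- tau x))" x] by simp
    qed
  qed
qed

lemma abs_linearization_error_le:
  assumes q: "q \<in> Xsp \<alpha>" and e: "e \<ge> 0" and near: "f_near e q"
  shows "\<bar>delay_integral (fst q) x (tau x) - delay_integral \<phi> x (tau x)
      - lin_integral \<phi> (fst (pminus q (\<phi>, \<delta>))) x (tau x)\<bar> \<le> e * E * rdist q * A"
proof -
  let ?\<psi> = "fst q" and ?\<rho> = "fst (pminus q (\<phi>, \<delta>))"
  have \<psi>: "?\<psi> \<in> BUC \<alpha>" using q by (auto simp: Xsp_def)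
  have \<rho>: "continuous_on UNIV (phibar ?\<rho>)" by (rule Xsp_continuous_on_phibar_pminus[OF q point_Xsp])
  have "\<bar>(delay_integral ?\<psi> x (tau x) - delay_integral \<phi> x (tau x) - lin_integral \<phi> ?\<rho> x (tau x))
    - (delay_integral ?\<psi> x 0 - delay_integral \<phi> x 0 - lin_integral \<phi> ?\<rho> x 0)\<bar> \<le> (e * E * rdist q) * \<bar>tau x - 0\<bar>"
  proof (rule mvt_abs_diff_le)
    fix u
    show "((\<lambda>t. delay_integral ?\<psi> x t - delay_integral \<phi> x t - lin_integral \<phi> ?\<rho> x t) has_real_derivative
       apply_bcontfun (f (phibar ?\<psi> (-u))) x - apply_bcontfun (f (phibar \<phi> (-u))) x
       - apply_bcontfun (blinfun_apply (f' (phibar \<phi> (-u))) (phibar ?\<rho> (-u))) x) (at u)"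
      by (intro DERIV_diff delay_integral_has_real_derivative lin_integral_has_real_derivative \<psi> phi_BUC \<rho>)
  next
    fix u assume "min 0 (tau x) \<le> u" "u \<le> max 0 (tau x)"
    then have u: "-T \<le> -u" using tau(2)[of x] T_pos by auto
    have "\<bar>apply_bcontfun (f (phibar ?\<psi> (-u))) x - apply_bcontfun (f (phibar \<phi> (-u))) x
       - apply_bcontfun (blinfun_apply (f' (phibar \<phi> (-u))) (phibar ?\<rho> (-u))) x\<bar>
      \<le> norm (f (phibar ?\<psi> (-u)) - f (phibar \<phi> (-u))
         - blinfun_apply (f' (phibar \<phi> (-u))) (phibar ?\<psi> (-u) - phibar \<phi> (-u)))"
      using abs_apply_bcontfun_le[of "f (phibar ?\<psi> (-u)) - f (phibar \<phi> (-u))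
         - blinfun_apply (f' (phibar \<phi> (-u))) (phibar ?\<psi> (-u) - phibar \<phi> (-u))" x]
      by (simp add: fst_pminus phibar_diff)
    also have "\<dots> \<le> e * norm (phibar ?\<psi> (-u) - phibar \<phi> (-u))" using near u by (simp add: f_near_def)
    also have "\<dots> \<le> e * (E * rdist q)" by (intro mult_left_mono norm_phibar_diff_le[OF q u] e)
    finally show "\<bar>apply_bcontfun (f (phibar ?\<psi> (-u))) x - apply_bcontfun (f (phibar \<phi> (-u))) x
       - apply_bcontfun (blinfun_apply (f' (phibar \<phi> (-u))) (phibar ?\<rho> (-u))) x\<bar> \<le> e * E * rdist q"
      by (simp add: mult.assoc)
  qed
  also have "\<dots> \<le> e * E * rdist q * A"
    using abs_tau_le[of x] e E_pos rdist_nonneg[OF q] by (simp add: mult_left_mono)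
  finally show ?thesis by (simp add: lin_integral_def)
qed

lemma abs_secant_error_le:
  fixes x :: 'a
  assumes adm: "admissible q" and e: "e \<ge> 0" and shift: "shift_small e q"
  defines "\<sigma> \<equiv> apply_bcontfun (tauhat f (fst q) (snd q)) x"
  shows "\<bar>delay_integral (fst q) x \<sigma> - delay_integral (fst q) x (tau x)
      - apply_bcontfun (f (phibar \<phi> (- tau x))) x * (\<sigma> - tau x)\<bar> \<le> (Lf * E * rdist q + e) * (Ctau * rdist q)"
proof -
  let ?a = "apply_bcontfun (f (phibar \<phi> (- tau x))) x"
  have q: "q \<in> Xsp \<alpha>" "fst q \<in> BUC \<alpha>" using adm by (auto simp: admissible_def Xsp_def)
  note \<sigma> = admissible_tauhat[OF adm, of x, folded \<sigma>_def]
  have "\<bar>(delay_integral (fst q) x \<sigma> - ?a * \<sigma>) - (delay_integral (fst q) x (tau x) - ?a * tau x)\<bar>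
      \<le> (Lf * E * rdist q + e) * \<bar>\<sigma> - tau x\<bar>"
  proof (rule mvt_abs_diff_le)
    fix u
    show "((\<lambda>t. delay_integral (fst q) x t - ?a * t) has_real_derivative
        apply_bcontfun (f (phibar (fst q) (-u))) x - ?a) (at u)"
      by (intro DERIV_diff delay_integral_has_real_derivative q(2) DERIV_cmult_right)
        (auto intro: derivative_eq_intros)
  next
    fix u assume u: "min (tau x) \<sigma> \<le> u" "u \<le> max (tau x) \<sigma>"
    then have "\<bar>u - tau x\<bar> \<le> Ctau * rdist q" using \<sigma>(3) by auto
    then have "\<bar>apply_bcontfun (f (phibar \<phi> (-u))) x - ?a\<bar> \<le> e" using shift by (simp add: shift_small_def)
    moreover have "\<bar>apply_bcontfun (f (phibar (fst q) (-u))) x - apply_bcontfun (f (phibar \<phi> (-u))) x\<bar>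
        \<le> Lf * E * rdist q"
      using u tau(2)[of x] \<sigma>(2) by (intro abs_f_phibar_diff_le[OF q(1)]) auto
    ultimately show "\<bar>apply_bcontfun (f (phibar (fst q) (-u))) x - ?a\<bar> \<le> Lf * E * rdist q + e" by linarith
  qed
  also have "\<dots> \<le> (Lf * E * rdist q + e) * (Ctau * rdist q)"
    using \<sigma>(3) Lf_nonneg E_pos rdist_nonneg[OF q(1)] e by (intro mult_left_mono) auto
  finally show ?thesis by (simp add: algebra_simps)
qed

lemma abs_tauhat_expansion_le:
  assumes adm: "admissible q" and e1: "e1 \<ge> 0" and e2: "e2 \<ge> 0"
    and near: "f_near e1 q" and shift: "shift_small e2 q"
  shows "\<bar>apply_bcontfun (tauhat f (fst q) (snd q)) x - tau x - apply_bcontfun (dtau (\<phi>, \<delta>) (pminus q (\<phi>, \<delta>))) x\<bar>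
     \<le> ((Lf * E * rdist q + e2) * (Ctau * rdist q) + e1 * E * rdist q * A) / m"
proof -
  have q: "q \<in> Xsp \<alpha>" using adm by (simp add: admissible_def)
  define \<sigma> where "\<sigma> = apply_bcontfun (tauhat f (fst q) (snd q)) x"
  define a where "a = apply_bcontfun (f (phibar \<phi> (- tau x))) x"
  define \<Lambda> where "\<Lambda> = lin_integral \<phi> (fst (pminus q (\<phi>, \<delta>))) x (tau x)"
  define G\<sigma> G\<tau> G\<phi> where "G\<sigma> = delay_integral (fst q) x \<sigma>" and "G\<tau> = delay_integral (fst q) x (tau x)"
    and "G\<phi> = delay_integral \<phi> x (tau x)"
  have a: "m \<le> a" unfolding a_def by (rule f_phibar_tau_ge)
  have "apply_bcontfun (dtau (\<phi>, \<delta>) (pminus q (\<phi>, \<delta>))) x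
      = ((apply_bcontfun (snd q) x - apply_bcontfun \<delta> x) - \<Lambda>) / a"
    using apply_dtau[OF phi_BUC Xsp_continuous_on_phibar_pminus[OF q point_Xsp], of \<delta> x]
    by (simp add: snd_pminus a_def \<Lambda>_def)
  also have "\<dots> = (G\<sigma> - G\<phi> - \<Lambda>) / a"
    using admissible_tauhat(1)[OF adm, of x] tau(1)[of x] by (simp add: G\<sigma>_def G\<phi>_def \<sigma>_def)
  finally have "\<sigma> - tau x - apply_bcontfun (dtau (\<phi>, \<delta>) (pminus q (\<phi>, \<delta>))) x
      = (a * (\<sigma> - tau x) - (G\<sigma> - G\<tau>) - (G\<tau> - G\<phi> - \<Lambda>)) / a"
    using a m_pos by (simp add: field_simps)
  also have "\<bar>\<dots>\<bar> \<le> ((Lf * E * rdist q + e2) * (Ctau * rdist q) + e1 * E * rdist q * A) / m"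
  proof (rule abs_divide_le_divide[OF _ a m_pos])
    have "\<bar>G\<sigma> - G\<tau> - a * (\<sigma> - tau x)\<bar> \<le> (Lf * E * rdist q + e2) * (Ctau * rdist q)"
      using abs_secant_error_le[OF adm e2 shift, of x] by (simp add: G\<sigma>_def G\<tau>_def a_def \<sigma>_def)
    moreover have "\<bar>G\<tau> - G\<phi> - \<Lambda>\<bar> \<le> e1 * E * rdist q * A"
      using abs_linearization_error_le[OF q e1 near, of x] by (simp add: G\<tau>_def G\<phi>_def \<Lambda>_def)
    ultimately show "\<bar>a * (\<sigma> - tau x) - (G\<sigma> - G\<tau>) - (G\<tau> - G\<phi> - \<Lambda>)\<bar>
        \<le> (Lf * E * rdist q + e2) * (Ctau * rdist q) + e1 * E * rdist q * A"
      by (simp only: abs_le_iff) linarith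
  qed
  finally show ?thesis by (simp add: \<sigma>_def)
qed


lemma norm_tauhat_expansion_le:
  assumes "admissible q" "e1 \<ge> 0" "e2 \<ge> 0" "f_near e1 q" "shift_small e2 q"
  shows "norm (tauhat f (fst q) (snd q) - tauhat f \<phi> \<delta> - dtau (\<phi>, \<delta>) (pminus q (\<phi>, \<delta>)))
     \<le> ((Lf * E * rdist q + e2) * (Ctau * rdist q) + e1 * E * rdist q * A) / m"
  by (rule norm_bound) (use abs_tauhat_expansion_le[OF assms] in simp)

lemma frechet_tauhat: "frechet_X \<alpha> (\<lambda>p. tauhat f (fst p) (snd p)) (Dtau f \<alpha>) (\<phi>, \<delta>) (dtau (\<phi>, \<delta>))"
  unfolding frechet_X_def
proof (intro conjI bounded_linear_X_dtau allI impI)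
  fix e :: real assume e: "e > 0"
  define e1 where "e1 = e * m / (3 * E * A)"
  define e2 where "e2 = e * m / (3 * Ctau)"
  have e12: "e1 > 0" "e2 > 0" using e m_pos E_pos A_pos Ctau_pos by (simp_all add: e1_def e2_def)
  have "near (\<lambda>q. admissible q \<and> f_near e1 q \<and> shift_small e2 q \<and>
      ((Lf * E + 1) * Ctau) * rdist q < e * m / 3)"
    using e12 e m_pos Lf_nonneg E_pos Ctau_pos
    by (intro near_conj near_admissible near_f_near near_shift_small near_scaled_rdist_less) auto
  then have "near (\<lambda>q. norm (tauhat f (fst q) (snd q) - tauhat f \<phi> \<delta> - dtau (\<phi>, \<delta>) (pminus q (\<phi>, \<delta>)))
      \<le> e * rdist q)"
  proof (rule near_mono, elim conjE)
    fix q assume q: "q \<in> Xsp \<alpha>" and adm: "admissible q" and near: "f_near e1 q"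
      and shift: "shift_small e2 q" and small: "(Lf * E + 1) * Ctau * rdist q < e * m / 3"
    let ?r = "rdist q"
    have r: "?r \<ge> 0" by (rule rdist_nonneg[OF q])
    have "(Lf * E * ?r + e2) * (Ctau * ?r) \<le> ((Lf * E + 1) * Ctau * ?r) * ?r + e2 * Ctau * ?r"
      using r Ctau_pos by (simp add: algebra_simps)
    also have "\<dots> \<le> e * m / 3 * ?r + e * m / 3 * ?r"
      using small r Ctau_pos by (intro add_mono mult_right_mono) (auto simp: e2_def)
    finally have "(Lf * E * ?r + e2) * (Ctau * ?r) + e1 * E * ?r * A \<le> e * m * ?r"
      using E_pos A_pos by (simp add: e1_def)
    then have "((Lf * E * ?r + e2) * (Ctau * ?r) + e1 * E * ?r * A) / m \<le> e * ?r"
      using m_pos by (simp add: pos_divide_le_eq algebra_simps)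
    then show "norm (tauhat f (fst q) (snd q) - tauhat f \<phi> \<delta> - dtau (\<phi>, \<delta>) (pminus q (\<phi>, \<delta>))) \<le> e * ?r"
      by (rule order_trans[OF norm_tauhat_expansion_le[OF adm less_imp_le[OF e12(1)] less_imp_le[OF e12(2)] near shift]])
  qed
  then show "\<exists>d>0. \<forall>q\<in>Dtau f \<alpha>. pnorm \<alpha> (pminus q (\<phi>, \<delta>)) < d \<longrightarrow>
      norm (tauhat f (fst q) (snd q) - tauhat f (fst (\<phi>, \<delta>)) (snd (\<phi>, \<delta>)) - dtau (\<phi>, \<delta>) (pminus q (\<phi>, \<delta>)))
        \<le> e * pnorm \<alpha> (pminus q (\<phi>, \<delta>))"
    unfolding rdist_def by (auto dest!: near_Dtau)
qed


lemma abs_lin_integral_base_diff_le: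
  assumes q: "q \<in> Xsp \<alpha>" and h: "h \<in> Xsp \<alpha>" and e: "e \<ge> 0" and near: "f_near e q" and t: "t \<le> T"
  shows "\<bar>lin_integral \<phi> (fst h) x t - lin_integral (fst q) (fst h) x t\<bar> \<le> e * E * pnorm \<alpha> h * \<bar>t\<bar>"
proof -
  have \<psi>: "fst q \<in> BUC \<alpha>" using q by (auto simp: Xsp_def)
  note hc = Xsp_continuous_on_phibar[OF h]
  show ?thesis
    unfolding lin_integral_def
  proof (subst kernel_integral_diff[symmetric],
      (rule continuous_on_lin_kernel[OF _ hc], fact phi_BUC \<psi>)+, rule abs_kernel_integral_le)
    show "continuous_on UNIV (\<lambda>s. blinfun_apply (f' (phibar \<phi> s)) (phibar (fst h) s)
        - blinfun_apply (f' (phibar (fst q) s)) (phibar (fst h) s))"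
      by (intro continuous_intros continuous_on_lin_kernel phi_BUC \<psi> hc)
    fix u assume "min 0 t \<le> u" "u \<le> max 0 t"
    then have u: "-T \<le> -u" using t T_pos by auto
    have "\<bar>apply_bcontfun (blinfun_apply (f' (phibar \<phi> (-u)) - f' (phibar (fst q) (-u))) (phibar (fst h) (-u))) x\<bar>
        \<le> norm (blinfun_apply (f' (phibar \<phi> (-u)) - f' (phibar (fst q) (-u))) (phibar (fst h) (-u)))"
      by (rule abs_apply_bcontfun_le)
    also have "\<dots> \<le> norm (f' (phibar \<phi> (-u)) - f' (phibar (fst q) (-u))) * norm (phibar (fst h) (-u))"
      by (rule norm_blinfun)
    also have "\<dots> \<le> e * (E * pnorm \<alpha> h)"
      using near u norm_phibar_le_pnorm[OF alpha_nonneg Xsp_weighted_bounded[OF h] less_imp_le[OF T_pos] u] e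
      by (intro mult_mono) (auto simp: f_near_def norm_minus_commute E_def less_imp_le)
    finally show "\<bar>apply_bcontfun (blinfun_apply (f' (phibar \<phi> (-u))) (phibar (fst h) (-u))
        - blinfun_apply (f' (phibar (fst q) (-u))) (phibar (fst h) (-u))) x\<bar> \<le> e * E * pnorm \<alpha> h"
      by (simp add: blinfun.diff_left mult.assoc)
  qed
qed

lemma abs_lin_integral_shift_le:
  fixes x :: 'a
  assumes adm: "admissible q" and h: "h \<in> Xsp \<alpha>" "pnorm \<alpha> h \<le> 1"
    and e: "e \<ge> 0" and near: "f_near e q" and small: "Ctau * rdist q \<le> 1"
  defines "\<sigma> \<equiv> apply_bcontfun (tauhat f (fst q) (snd q)) x"
  shows "\<bar>lin_integral \<phi> (fst h) x (tau x) - lin_integral (fst q) (fst h) x \<sigma>\<bar> \<le> F * E * (Ctau * rdist q) + e * E * (A + 1)"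
proof -
  have q: "q \<in> Xsp \<alpha>" using adm by (simp add: admissible_def)
  note \<sigma> = admissible_tauhat[OF adm, of x, folded \<sigma>_def]
  have Ph: "0 \<le> pnorm \<alpha> h" by (rule pnorm_nonneg[OF Xsp_weighted_bounded[OF h(1)]])
  have "\<bar>lin_integral \<phi> (fst h) x \<sigma> - lin_integral \<phi> (fst h) x (tau x)\<bar> \<le> (F * E * pnorm \<alpha> h) * \<bar>\<sigma> - tau x\<bar>"
    unfolding lin_integral_def
    by (rule abs_kernel_integral_diff_le[OF continuous_on_lin_kernel[OF phi_BUC Xsp_continuous_on_phibar[OF h(1)]]])
      (use \<sigma>(2) tau(2)[of x] in \<open>auto intro!: abs_lin_kernel_le[OF h(1)]\<close>)
  also have "\<dots> \<le> (F * E * 1) * (Ctau * rdist q)"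
    using F(1) E_pos Ph h(2) \<sigma>(3) by (intro mult_mono) auto
  finally have 1: "\<bar>lin_integral \<phi> (fst h) x \<sigma> - lin_integral \<phi> (fst h) x (tau x)\<bar> \<le> F * E * (Ctau * rdist q)"
    by simp
  have "\<bar>lin_integral \<phi> (fst h) x \<sigma> - lin_integral (fst q) (fst h) x \<sigma>\<bar> \<le> (e * E * pnorm \<alpha> h) * \<bar>\<sigma>\<bar>"
    by (rule abs_lin_integral_base_diff_le[OF q h(1) e near less_imp_le[OF \<sigma>(2)]])
  also have "\<dots> \<le> (e * E * 1) * (A + 1)"
    using e E_pos Ph h(2) \<sigma>(3) abs_tau_le[of x] small by (intro mult_mono) auto
  finally have 2: "\<bar>lin_integral \<phi> (fst h) x \<sigma> - lin_integral (fst q) (fst h) x \<sigma>\<bar> \<le> e * E * (A + 1)" by simp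
  show ?thesis using 1 2 by linarith
qed

lemma abs_f_phibar_tauhat_diff_le:
  assumes adm: "admissible q" and shift: "shift_small e q"
  shows "\<bar>apply_bcontfun (f (phibar \<phi> (- tau x))) x
      - apply_bcontfun (f (phibar (fst q) (- apply_bcontfun (tauhat f (fst q) (snd q)) x))) x\<bar>
    \<le> e + Lf * E * rdist q"
proof -
  let ?\<sigma> = "apply_bcontfun (tauhat f (fst q) (snd q)) x"
  have "\<bar>apply_bcontfun (f (phibar \<phi> (- ?\<sigma>))) x - apply_bcontfun (f (phibar \<phi> (- tau x))) x\<bar> \<le> e"
    using shift admissible_tauhat(3)[OF adm, of x] by (simp add: shift_small_def)
  moreover have "\<bar>apply_bcontfun (f (phibar (fst q) (- ?\<sigma>))) x - apply_bcontfun (f (phibar \<phi> (- ?\<sigma>))) x\<bar>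
      \<le> Lf * E * rdist q"
    using adm admissible_tauhat(2)[OF adm, of x] by (intro abs_f_phibar_diff_le) (auto simp: admissible_def)
  ultimately show ?thesis by linarith
qed

lemma abs_dtau_diff_le:
  assumes adm: "admissible q" and h: "h \<in> Xsp \<alpha>" "pnorm \<alpha> h \<le> 1"
    and e2: "e2 \<ge> 0" and shift: "shift_small e2 q" and e3: "e3 \<ge> 0" and near: "f_near e3 q"
    and small: "Ctau * rdist q \<le> 1"
  shows "\<bar>apply_bcontfun (dtau q h) x - apply_bcontfun (dtau (\<phi>, \<delta>) h) x\<bar>
     \<le> (F * E * (Ctau * rdist q) + e3 * E * (A + 1)) / (m / 2)
       + (1 + F * E * A) * (e2 + Lf * E * rdist q) / (m / 2 * m)"
proof -
  have \<psi>: "fst q \<in> BUC \<alpha>" using adm by (auto simp: admissible_def Xsp_def)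
  define \<sigma> where "\<sigma> = apply_bcontfun (tauhat f (fst q) (snd q)) x"
  define ap where "ap = apply_bcontfun (f (phibar \<phi> (- tau x))) x"
  define aq where "aq = apply_bcontfun (f (phibar (fst q) (- \<sigma>))) x"
  define \<Lambda>p where "\<Lambda>p = lin_integral \<phi> (fst h) x (tau x)"
  define \<Lambda>q where "\<Lambda>q = lin_integral (fst q) (fst h) x \<sigma>"
  define y where "y = apply_bcontfun (snd h) x"
  have ap: "m \<le> ap" unfolding ap_def by (rule f_phibar_tau_ge)
  have aq: "m / 2 \<le> aq"
    unfolding aq_def \<sigma>_def using admissible_tauhat(2)[OF adm, of x] by (intro admissible_f_phibar_ge[OF adm]) auto
  have "apply_bcontfun (dtau q h) x = (y - \<Lambda>q) / aq"
    using apply_dtau[OF \<psi> Xsp_continuous_on_phibar[OF h(1)], of "snd q" x]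
    by (simp add: y_def \<Lambda>q_def aq_def \<sigma>_def)
  moreover have "apply_bcontfun (dtau (\<phi>, \<delta>) h) x = (y - \<Lambda>p) / ap"
    using apply_dtau_point[OF h(1), of x] by (simp add: y_def \<Lambda>p_def ap_def)
  moreover have "(y - \<Lambda>q) / aq - (y - \<Lambda>p) / ap = (\<Lambda>p - \<Lambda>q) / aq + ((y - \<Lambda>p) * (ap - aq)) / (aq * ap)"
    using ap aq m_pos by (simp add: field_simps)
  moreover have "\<bar>(\<Lambda>p - \<Lambda>q) / aq\<bar> \<le> (F * E * (Ctau * rdist q) + e3 * E * (A + 1)) / (m / 2)"
    using abs_lin_integral_shift_le[OF adm h e3 near small, of x] aq m_pos
    by (intro abs_divide_le_divide) (auto simp: \<Lambda>p_def \<Lambda>q_def \<sigma>_def)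
  moreover have "\<bar>((y - \<Lambda>p) * (ap - aq)) / (aq * ap)\<bar> \<le> (1 + F * E * A) * (e2 + Lf * E * rdist q) / (m / 2 * m)"
  proof (rule abs_divide_le_divide)
    have "\<bar>y - \<Lambda>p\<bar> \<le> 1 + F * E * A"
      using abs_dtau_numerator_le[OF h(1), of x] h(2) F(1) E_pos A_pos
        mult_left_mono[OF h(2), of "1 + F * E * A"] by (simp add: y_def \<Lambda>p_def)
    moreover have "\<bar>ap - aq\<bar> \<le> e2 + Lf * E * rdist q"
      using abs_f_phibar_tauhat_diff_le[OF adm shift, of x] by (simp add: ap_def aq_def \<sigma>_def)
    ultimately show "\<bar>(y - \<Lambda>p) * (ap - aq)\<bar> \<le> (1 + F * E * A) * (e2 + Lf * E * rdist q)"
      unfolding abs_mult by (intro mult_mono) auto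
    show "m / 2 * m \<le> aq * ap" using aq ap m_pos by (intro mult_mono) auto
  qed (use m_pos in simp)
  ultimately show ?thesis by (smt (verit))
qed

lemma opnorm_dtau_diff_le:
  assumes adm: "admissible q" and e2: "e2 \<ge> 0" "shift_small e2 q" and e3: "e3 \<ge> 0" "f_near e3 q"
    and small: "Ctau * rdist q \<le> 1"
  shows "opnorm_X \<alpha> (\<lambda>h. dtau q h - dtau (\<phi>, \<delta>) h)
     \<le> (F * E * (Ctau * rdist q) + e3 * E * (A + 1)) / (m / 2)
       + (1 + F * E * A) * (e2 + Lf * E * rdist q) / (m / 2 * m)"
proof (rule opnorm_X_le, rule norm_bound)
  fix h :: "'a hist \<times> ('a, real) bcontfun" and x
  assume h: "h \<in> Xsp \<alpha>" "pnorm \<alpha> h \<le> 1"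
  show "norm (apply_bcontfun (dtau q h - dtau (\<phi>, \<delta>) h) x)
     \<le> (F * E * (Ctau * rdist q) + e3 * E * (A + 1)) / (m / 2)
       + (1 + F * E * A) * (e2 + Lf * E * rdist q) / (m / 2 * m)"
    using abs_dtau_diff_le[OF adm h e2 e3 small, of x] by simp
qed

lemma dtau_continuous:
  assumes e: "e > 0"
  shows "\<exists>d>0. \<forall>q\<in>Dtau f \<alpha>. pnorm \<alpha> (pminus q (\<phi>, \<delta>)) < d \<longrightarrow>
           opnorm_X \<alpha> (\<lambda>h. dtau q h - dtau (\<phi>, \<delta>) h) \<le> e"
proof -
  define N where "N = 1 + F * E * A"
  have N: "N > 0" using F(1) E_pos A_pos by (simp add: N_def add_pos_nonneg)
  define e2 where "e2 = e * m * m / (8 * N)"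
  define e3 where "e3 = e * m / 8 / (E * (A + 1))"
  have e23: "e2 > 0" "e3 > 0" using e m_pos N E_pos A_pos by (simp_all add: e2_def e3_def add_pos_pos)
  have "near (\<lambda>q. admissible q \<and> shift_small e2 q \<and> f_near e3 q \<and> Ctau * rdist q < 1 \<and>
      (F * E * Ctau) * rdist q < e * m / 8 \<and> (N * (Lf * E + 1)) * rdist q < e * m * m / 8)"
    using e23 e m_pos N F(1) E_pos Ctau_pos Lf_nonneg
    by (intro near_conj near_admissible near_shift_small near_f_near near_scaled_rdist_less) auto
  then have "near (\<lambda>q. opnorm_X \<alpha> (\<lambda>h. dtau q h - dtau (\<phi>, \<delta>) h) \<le> e)"
  proof (rule near_mono, elim conjE)
    fix q assume q: "q \<in> Xsp \<alpha>" and adm: "admissible q" and shift: "shift_small e2 q"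
      and near: "f_near e3 q" and small: "Ctau * rdist q < 1"
      and r1: "F * E * Ctau * rdist q < e * m / 8" and r2: "N * (Lf * E + 1) * rdist q < e * m * m / 8"
    let ?r = "rdist q"
    have r: "?r \<ge> 0" by (rule rdist_nonneg[OF q])
    have "E * (A + 1) \<noteq> 0" using E_pos A_pos by simp
    then have "e3 * (E * (A + 1)) = e * m / 8" unfolding e3_def by simp
    then have "e3 * E * (A + 1) = e * m / 8" by (simp only: mult.assoc)
    then have "(F * E * (Ctau * ?r) + e3 * E * (A + 1)) / (m / 2) \<le> (e * m / 4) / (m / 2)"
      using r1 m_pos by (intro divide_right_mono) (auto simp: algebra_simps)
    also have "\<dots> = e / 2" using m_pos by simp
    finally have 1: "(F * E * (Ctau * ?r) + e3 * E * (A + 1)) / (m / 2) \<le> e / 2" .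
    have "N * (e2 + Lf * E * ?r) \<le> N * e2 + N * (Lf * E + 1) * ?r"
      using N r by (simp add: algebra_simps)
    also have "\<dots> \<le> e * m * m / 4" using r2 N by (simp add: e2_def)
    finally have "N * (e2 + Lf * E * ?r) / (m / 2 * m) \<le> (e * m * m / 4) / (m / 2 * m)"
      using m_pos by (intro divide_right_mono) auto
    also have "\<dots> = e / 2" using m_pos by simp
    finally have 2: "N * (e2 + Lf * E * ?r) / (m / 2 * m) \<le> e / 2" .
    show "opnorm_X \<alpha> (\<lambda>h. dtau q h - dtau (\<phi>, \<delta>) h) \<le> e"
      using opnorm_dtau_diff_le[OF adm less_imp_le[OF e23(1)] shift less_imp_le[OF e23(2)] near
          less_imp_le[OF small]] 1 2
      unfolding N_def by linarith
  qed
  then show ?thesis by (rule near_Dtau)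
qed

end

context delay_setting
begin

lemma Dtau_pointE:
  assumes "(\<phi>, \<delta>) \<in> Dtau f \<alpha>"
  obtains T m \<eta> where "Dtau_point f f' \<alpha> Lf \<phi> \<delta> T m \<eta>"
proof -
  obtain T m \<eta> where "T > 0" "m > 0" "\<eta> > 0"
    "\<And>s x. -T \<le> s \<Longrightarrow> m \<le> apply_bcontfun (f (phibar \<phi> s)) x"
    "\<And>x. apply_bcontfun \<delta> x + \<eta> \<le> delay_integral \<phi> x T"
    using Dtau_margin[OF assms] by blast
  then show ?thesis
    using that assms by (blast intro: Dtau_point.intro delay_setting_axioms Dtau_point_axioms.intro)
qed

lemma open_Dtau: "open_X \<alpha> (Dtau f \<alpha>)"
  unfolding open_X_def
proof (intro conjI ballI Dtau_subset_Xsp)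
  fix p assume p: "p \<in> Dtau f \<alpha>"
  obtain \<phi> \<delta> where p_eq: "p = (\<phi>, \<delta>)" by (cases p)
  then obtain T m \<eta> where "Dtau_point f f' \<alpha> Lf \<phi> \<delta> T m \<eta>" using p Dtau_pointE by blast
  then interpret Dtau_point f f' \<alpha> Lf \<phi> \<delta> T m \<eta> .
  show "\<exists>e>0. \<forall>q\<in>Xsp \<alpha>. pnorm \<alpha> (pminus q p) < e \<longrightarrow> q \<in> Dtau f \<alpha>"
    using near_Xsp[OF near_mono[OF near_admissible admissible_in_Dtau]] by (simp add: p_eq)
qed

lemma C1_on_X_tauhat: "C1_on_X \<alpha> (\<lambda>p. tauhat f (fst p) (snd p)) (Dtau f \<alpha>)"
  unfolding C1_on_X_def
proof (intro exI[of _ dtau] conjI ballI allI impI)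
  fix p assume p: "p \<in> Dtau f \<alpha>"
  obtain \<phi> \<delta> where p_eq: "p = (\<phi>, \<delta>)" by (cases p)
  then obtain T m \<eta> where "Dtau_point f f' \<alpha> Lf \<phi> \<delta> T m \<eta>" using p Dtau_pointE by blast
  then interpret Dtau_point f f' \<alpha> Lf \<phi> \<delta> T m \<eta> .
  show "frechet_X \<alpha> (\<lambda>p. tauhat f (fst p) (snd p)) (Dtau f \<alpha>) p (dtau p)"
    using frechet_tauhat by (simp add: p_eq)
  fix e :: real assume "e > 0"
  then show "\<exists>d>0. \<forall>q\<in>Dtau f \<alpha>. pnorm \<alpha> (pminus q p) < d \<longrightarrow> opnorm_X \<alpha> (\<lambda>h. dtau q h - dtau p h) \<le> e"
    using dtau_continuous by (simp add: p_eq)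
qed

end

theorem lemma3p5:
  fixes f :: "('a::metric_space, real) bcontfun \<Rightarrow> ('a, real) bcontfun"
    and \<alpha> :: real
  assumes Omega_compact: "compact (UNIV :: 'a set)"
    and Omega_in_Rn: "\<exists>e :: 'a \<Rightarrow> 'n::euclidean_space. continuous_on UNIV e \<and> inj e"
    and alpha: "\<alpha> \<ge> 0"
    and f_lipschitz: "\<exists>K. K-lipschitz_on UNIV f"
    and f_bounds: "\<exists>M. \<forall>\<phi> x. 0 < apply_bcontfun (f \<phi>) x \<and> apply_bcontfun (f \<phi>) x \<le> M"
    and f_nonincr: "\<And>\<phi> \<psi>. (\<forall>x. apply_bcontfun \<phi> x \<le> apply_bcontfun \<psi> x) \<Longrightarrow>
                       (\<forall>x. apply_bcontfun (f \<psi>) x \<le> apply_bcontfun (f \<phi>) x)"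
    and f_C1: "\<exists>f'. (\<forall>\<phi>. (f has_derivative blinfun_apply (f' \<phi>)) (at \<phi>)) \<and> continuous_on UNIV f'"
  shows "open_X \<alpha> (Dtau f \<alpha>) \<and> C1_on_X \<alpha> (\<lambda>p. tauhat f (fst p) (snd p)) (Dtau f \<alpha>)"
proof -
  obtain Lf where "Lf-lipschitz_on UNIV f" using f_lipschitz by blast
  moreover obtain f' where "\<And>\<phi>. (f has_derivative blinfun_apply (f' \<phi>)) (at \<phi>)" "continuous_on UNIV f'"
    using f_C1 by blast
  moreover have "\<And>\<phi> x. 0 < apply_bcontfun (f \<phi>) x" using f_bounds by blast
  ultimately interpret delay_setting f f' \<alpha> Lf
    using Omega_compact alpha by unfold_locales
  show ?thesis using open_Dtau C1_on_X_tauhat by blast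
qed

end
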